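(* Let $d\ge 3$ and $1\le n\le d-1$ be integers. For $x_1,\dots,x_n\in S^{d-1}$ and $r>0$, let $D_r(x_1,\dots,x_n)$ denote the average of $1/\mathrm{Det}(y_1,\dots,y_n)$ over $(y_1,\dots,y_n)\in B_r(x_1)\times\cdots\times B_r(x_n)$ (with respect to the normalized restriction of $\pi^n$). Then there is a constant $C_{n,d}>0$, depending only on $n$ and $d$, such that $$D_r(x_1,\dots,x_n)\,\mathrm{Det}(x_1,\dots,x_n)<C_{n,d}$$ for all $r>0$ and all $x_1,\dots,x_n\in S^{d-1}$.
   Context: $S^{d-1}$ is the unit sphere in $\mathbb{R}^d$ and $\pi$ the uniform probability measure on it. $B_r(x)=\{y\in S^{d-1}: \text{spherical distance of } x,y <r\}$. For vectors $y_1,\dots,y_m\in\mathbb{R}^d$, $\mathrm{Det}(y_1,\dots,y_m)=\sqrt{\det\big((y_i^{\top}y_j)_{i,j=1}^m\big)}$, the $m$-dimensional volume of the parallelepiped spanned by them. *)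

theory Defs
  imports "HOL-Analysis.Analysis"
begin

text \<open>Uniform probability measure on the unit sphere S^{d-1} of a Euclidean space,
  defined as the normalized cone measure: pi(A) = vol{t x : 0 < t <= 1, x in A} / vol(unit ball).\<close>
definition sphere_measure :: "'a::euclidean_space measure" where
  "sphere_measure =
     measure_of (sphere 0 1) (sets (restrict_space borel (sphere 0 1)))
       (\<lambda>A. emeasure lborel {t *\<^sub>R x | t x. 0 < t \<and> t \<le> 1 \<and> x \<in> A}
             / emeasure lborel (ball (0::'a) 1))"

definition sph_dist :: "'a::euclidean_space \<Rightarrow> 'a \<Rightarrow> real" where
  "sph_dist x y = arccos (x \<bullet> y)"

definition sph_cap :: "real \<Rightarrow> 'a::euclidean_space \<Rightarrow> 'a set" where
  "sph_cap r x = {y \<in> sphere 0 1. sph_dist x y < r}"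

definition Det :: "('n::finite \<Rightarrow> real ^ 'd) \<Rightarrow> real" where
  "Det y = sqrt (det (\<chi> i j. y i \<bullet> y j))"

text \<open>D_r(x_1,...,x_n): average of 1/Det over B_r(x_1) x ... x B_r(x_n) w.r.t. pi^n
  (1/0 interpreted as infinity).\<close>
definition D :: "real \<Rightarrow> ('n::finite \<Rightarrow> real ^ 'd) \<Rightarrow> ennreal" where
  "D r x =
     (let M = PiM UNIV (\<lambda>_::'n. sphere_measure :: (real ^ 'd) measure);
          B = PiE UNIV (\<lambda>i. sph_cap r (x i))
      in (\<integral>\<^sup>+ y \<in> B. inverse (ennreal (Det y)) \<partial>M) / emeasure M B)"

end

(* The volume is a product of heights, Det_on S y = infdist (y k) (span (y ` (S - {k})))
   times Det_on (S - {k}) y.  Moving every vector by at most rho = min r 2 therefore bounds Det x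
   by 2^n times the sum over T of rho^(n - |T|) Det_on T y, and it remains to bound the averages of
   the ratios Det_on T y / Det y over the product of caps by (K / rho)^(n - |T|).  Integrating out
   one coordinate at a time, each ratio contributes the reciprocal of the distance from a point of
   a cap to a subspace of codimension at least 2.  Its average over a cap of radius rho is
   O(1 / rho): in a dyadic decomposition, the points of the cap within distance s of the subspace
   have measure O(s^2 rho^(d-3)) (a box estimate in an orthonormal frame adapted to the subspace and
   to the centre of the cap), whereas the cap itself has measure at least of order rho^(d-1).
   Measures on the sphere are computed as volumes of the cones over the sets. *)

theory Submission
  imports Defs
begin

section \<open>Volumes of subfamilies\<close>

text \<open>The Gram matrix of the subfamily indexed by S, padded with the identity outside S, so that
  Det_on S y is the S-dimensional volume spanned by the y i with i in S.\<close>
definition gram_on :: "'n set \<Rightarrow> ('n::finite \<Rightarrow> 'a::euclidean_space) \<Rightarrow> real^'n^'n" where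
  "gram_on S y = (\<chi> i j. if i \<in> S \<and> j \<in> S then y i \<bullet> y j else if i = j then 1 else 0)"

definition Det_on :: "'n set \<Rightarrow> ('n::finite \<Rightarrow> 'a::euclidean_space) \<Rightarrow> real" where
  "Det_on S y = sqrt (det (gram_on S y))"

lemma Det_eq_Det_on_UNIV: "Det y = Det_on UNIV y"
  unfolding Det_def Det_on_def gram_on_def by simp

lemma gram_on_cong: "(\<And>i. i \<in> S \<Longrightarrow> y i = z i) \<Longrightarrow> gram_on S y = gram_on S z"
  unfolding gram_on_def by (simp cong: if_cong conj_cong)

lemma Det_on_cong: "(\<And>i. i \<in> S \<Longrightarrow> y i = z i) \<Longrightarrow> Det_on S y = Det_on S z"
  unfolding Det_on_def using gram_on_cong by metis

lemma det_gram_on_update_add_span: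
  fixes y :: "'n::finite \<Rightarrow> 'a::euclidean_space"
  assumes k: "k \<in> S" and v: "v \<in> span (y ` (S - {k}))"
  shows "det (gram_on S (y(k := y k + v))) = det (gram_on S y)"
proof -
  \<comment> \<open>Adding v to y k is a row operation followed by the same column operation on the Gram matrix.\<close>
  define y' where "y' = y(k := y k + v)"
  define L :: "'a \<Rightarrow> real^'n" where "L u = (\<chi> b. if b \<in> S then u \<bullet> y b else 0)" for u
  define L' :: "'a \<Rightarrow> real^'n" where "L' u = (\<chi> b. if b \<in> S then u \<bullet> y' b else 0)" for u
  have lin: "linear L" "linear L'" unfolding L_def L'_def
    by (auto intro!: linearI simp: vec_eq_iff inner_add_left)
  have row_op: "L v \<in> vec.span {row j M |j. j \<noteq> k}" if "\<And>j. j \<in> S - {k} \<Longrightarrow> row j M = L (y j)"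
    and "linear L" for L :: "'a \<Rightarrow> real^'n" and M :: "real^'n^'n"
  proof -
    have "L v \<in> span (L ` y ` (S - {k}))" using span_linear_image[OF \<open>linear L\<close>] v by blast
    moreover have "L ` y ` (S - {k}) \<subseteq> {row j M |j. j \<noteq> k}" using that(1) by force
    ultimately show ?thesis unfolding span_vec_eq using span_mono by blast
  qed
  define M1 where "M1 = (\<chi> a. if a = k then row k (gram_on S y) + L v else row a (gram_on S y))"
  have "det M1 = det (gram_on S y)"
    unfolding M1_def by (rule det_row_span, rule row_op[OF _ lin(1)])
      (auto simp: gram_on_def L_def row_def vec_eq_iff)
  then have d2: "det (transpose M1) = det (gram_on S y)" by (simp add: det_transpose)
  define M3 where "M3 = (\<chi> a. if a = k then row k (transpose M1) + L' v else row a (transpose M1))"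
  have "det M3 = det (transpose M1)"
    unfolding M3_def by (rule det_row_span, rule row_op[OF _ lin(2)])
      (use k in \<open>auto simp: M1_def gram_on_def L_def L'_def row_def transpose_def y'_def vec_eq_iff
          inner_commute inner_add_left inner_add_right\<close>)
  moreover have "M3 = gram_on S y'"
    using k unfolding M3_def M1_def gram_on_def L_def L'_def row_def transpose_def y'_def
    by (auto simp: vec_eq_iff inner_commute inner_add_left inner_add_right)
  ultimately show ?thesis using d2 unfolding y'_def by simp
qed

lemma det_gram_on_orthogonal:
  fixes y :: "'n::finite \<Rightarrow> 'a::euclidean_space"
  assumes k: "k \<in> S" and orth: "\<And>j. j \<in> S - {k} \<Longrightarrow> y k \<bullet> y j = 0"
  shows "det (gram_on S y) = (y k \<bullet> y k) * det (gram_on (S - {k}) y)"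
proof -
  define G where "G = gram_on (S - {k}) y"
  have "gram_on S y = (\<chi> i. if i = k then (y k \<bullet> y k) *s row i G else row i G)"
    using k orth unfolding G_def gram_on_def row_def by (auto simp: vec_eq_iff inner_commute)
  then have "det (gram_on S y) = (y k \<bullet> y k) * det (\<chi> i. row i G)"
    using det_row_mul[of k "y k \<bullet> y k" "\<lambda>i. row i G" "\<lambda>i. row i G"] by simp
  then show ?thesis by (simp add: G_def row_def vec_eq_iff)
qed

lemma infdist_span_orthogonal_decomp:
  fixes x :: "'a::euclidean_space"
  assumes p: "p \<in> span X" and q: "\<And>w. w \<in> span X \<Longrightarrow> orthogonal q w" and x: "x = p + q"
  shows "infdist x (span X) = norm q"
proof (rule antisym)
  show "infdist x (span X) \<le> norm q"
    using infdist_le[OF p, of x] x by (simp add: dist_norm)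
  have "norm q \<le> dist x a" if a: "a \<in> span X" for a
  proof -
    have "p - a \<in> span X" using p a by (simp add: span_diff)
    then have "(norm (q + (p - a)))\<^sup>2 = (norm q)\<^sup>2 + (norm (p - a))\<^sup>2"
      using q by (intro norm_add_Pythagorean) (simp add: orthogonal_def)
    then have "(norm q)\<^sup>2 \<le> (norm (x - a))\<^sup>2" using x by (simp add: algebra_simps)
    then show ?thesis by (simp add: dist_norm power2_le_iff_abs_le)
  qed
  then show "norm q \<le> infdist x (span X)"
    unfolding infdist_def using span_zero by (auto intro!: cINF_greatest)
qed

lemma infdist_span_add_le:
  fixes a b :: "'a::euclidean_space"
  shows "infdist (a + b) (span X) \<le> infdist a (span X) + infdist b (span X)"
proof -
  obtain pa qa where pa: "pa \<in> span X" "\<And>w. w \<in> span X \<Longrightarrow> orthogonal qa w" "a = pa + qa"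
    using orthogonal_subspace_decomp_exists[of X a] by blast
  obtain pb qb where pb: "pb \<in> span X" "\<And>w. w \<in> span X \<Longrightarrow> orthogonal qb w" "b = pb + qb"
    using orthogonal_subspace_decomp_exists[of X b] by blast
  have "infdist (a + b) (span X) = norm (qa + qb)"
    by (rule infdist_span_orthogonal_decomp[where p="pa + pb"])
       (use pa pb in \<open>auto simp: span_add orthogonal_clauses\<close>)
  also have "\<dots> \<le> norm qa + norm qb" by (rule norm_triangle_ineq)
  finally show ?thesis
    using infdist_span_orthogonal_decomp[OF pa] infdist_span_orthogonal_decomp[OF pb] by simp
qed

lemma det_gram_on_remove:
  fixes y :: "'n::finite \<Rightarrow> 'a::euclidean_space"
  assumes k: "k \<in> S"
  shows "det (gram_on S y) = (infdist (y k) (span (y ` (S - {k}))))\<^sup>2 * det (gram_on (S - {k}) y)"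
proof -
  obtain p q where pq: "p \<in> span (y ` (S - {k}))" "\<And>w. w \<in> span (y ` (S - {k})) \<Longrightarrow> orthogonal q w"
      "y k = p + q"
    using orthogonal_subspace_decomp_exists[of "y ` (S - {k})" "y k"] by blast
  define y' where "y' = y(k := y k + - p)"
  have "- p \<in> span (y ` (S - {k}))" using pq(1) by (simp add: span_neg)
  then have "det (gram_on S y) = det (gram_on S y')"
    unfolding y'_def by (rule det_gram_on_update_add_span[OF k, symmetric])
  also have "\<dots> = (y' k \<bullet> y' k) * det (gram_on (S - {k}) y')"
  proof (rule det_gram_on_orthogonal[OF k])
    fix j assume j: "j \<in> S - {k}"
    then have "y j \<in> span (y ` (S - {k}))" by (intro span_base) auto
    then show "y' k \<bullet> y' j = 0" using pq(2,3) j by (auto simp: y'_def orthogonal_def)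
  qed
  also have "gram_on (S - {k}) y' = gram_on (S - {k}) y"
    by (rule gram_on_cong) (auto simp: y'_def)
  also have "y' k \<bullet> y' k = (infdist (y k) (span (y ` (S - {k}))))\<^sup>2"
    using infdist_span_orthogonal_decomp[OF pq] pq(3) by (simp add: y'_def power2_norm_eq_inner)
  finally show ?thesis .
qed

lemma det_gram_on_nonneg: "0 \<le> det (gram_on S (y :: 'n::finite \<Rightarrow> 'a::euclidean_space))"
proof (induction "card S" arbitrary: S)
  case 0
  then have "gram_on S y = mat 1" by (simp add: gram_on_def mat_def vec_eq_iff)
  then show ?case by simp
next
  case (Suc m)
  then obtain k where "k \<in> S" by (metis card.empty ex_in_conv nat.distinct(1))
  with Suc show ?case using det_gram_on_remove[of k S y] by simp
qed

lemma Det_on_nonneg: "0 \<le> Det_on S y"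
  unfolding Det_on_def using det_gram_on_nonneg by simp

lemma Det_on_remove:
  fixes y :: "'n::finite \<Rightarrow> 'a::euclidean_space"
  assumes "k \<in> S"
  shows "Det_on S y = infdist (y k) (span (y ` (S - {k}))) * Det_on (S - {k}) y"
  unfolding Det_on_def det_gram_on_remove[OF assms] real_sqrt_mult by (simp add: infdist_nonneg)

lemma Det_on_update_add_le:
  fixes y :: "'n::finite \<Rightarrow> 'a::euclidean_space"
  assumes k: "k \<in> S"
  shows "Det_on S (y(k := a + b)) \<le> Det_on S (y(k := a)) + norm b * Det_on (S - {k}) y"
proof -
  let ?W = "span (y ` (S - {k}))"
  have "(y(k := u)) ` (S - {k}) = y ` (S - {k})" for u by auto
  moreover have "Det_on (S - {k}) (y(k := u)) = Det_on (S - {k}) y" for u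
    by (rule Det_on_cong) auto
  ultimately have eq: "Det_on S (y(k := u)) = infdist u ?W * Det_on (S - {k}) y" for u
    using Det_on_remove[OF k, of "y(k := u)"] by simp
  have "infdist (a + b) ?W \<le> infdist a ?W + norm b"
    using infdist_span_add_le[of a b "y ` (S - {k})"] infdist_le[OF span_zero, of b "y ` (S - {k})"]
    by simp
  then have "infdist (a + b) ?W * Det_on (S - {k}) y \<le> (infdist a ?W + norm b) * Det_on (S - {k}) y"
    using Det_on_nonneg by (rule mult_right_mono)
  then show ?thesis unfolding eq by (simp add: distrib_right)
qed

lemma Det_on_perturb_le_card:
  fixes y z :: "'n::finite \<Rightarrow> 'a::euclidean_space"
  assumes "0 \<le> \<rho>"
  shows "card {i\<in>S. z i \<noteq> y i} = m \<Longrightarrow> \<forall>i\<in>S. norm (z i - y i) \<le> \<rho> \<Longrightarrow>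
    Det_on S z \<le> 2 ^ m * (\<Sum>T\<in>Pow S. \<rho> ^ card (S - T) * Det_on T y)"
proof (induction m arbitrary: S z)
  case 0
  then have "Det_on S z = \<rho> ^ card (S - S) * Det_on S y"
    using Det_on_cong[of S z y] by simp
  also have "\<dots> \<le> (\<Sum>T\<in>Pow S. \<rho> ^ card (S - T) * Det_on T y)"
    by (rule member_le_sum) (use assms Det_on_nonneg in \<open>auto intro!: mult_nonneg_nonneg\<close>)
  finally show ?case by simp
next
  case (Suc m)
  let ?F = "\<lambda>S. \<Sum>T\<in>Pow S. \<rho> ^ card (S - T) * Det_on T y"
  obtain k where k: "k \<in> S" "z k \<noteq> y k"
    using Suc.prems(1) by (metis (mono_tags, lifting) card.empty empty_Collect_eq nat.simps(3))
  define z0 where "z0 = z(k := y k)"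
  have "{i\<in>S. z0 i \<noteq> y i} = {i\<in>S. z i \<noteq> y i} - {k}" "{i\<in>S - {k}. z0 i \<noteq> y i} = {i\<in>S. z i \<noteq> y i} - {k}"
    by (auto simp: z0_def)
  then have card: "card {i\<in>S. z0 i \<noteq> y i} = m" "card {i\<in>S - {k}. z0 i \<noteq> y i} = m"
    using Suc.prems(1) k by simp_all
  have near: "\<forall>i\<in>S. norm (z0 i - y i) \<le> \<rho>" using Suc.prems(2) assms by (auto simp: z0_def)
  have "z = z0(k := y k + (z k - y k))" "z0(k := y k) = z0" by (simp_all add: z0_def)
  then have "Det_on S z \<le> Det_on S z0 + norm (z k - y k) * Det_on (S - {k}) z0"
    using Det_on_update_add_le[OF k(1), of z0 "y k" "z k - y k"] by simp
  also have "\<dots> \<le> 2 ^ m * ?F S + \<rho> * (2 ^ m * ?F (S - {k}))"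
    using Suc.IH[OF card(1) near] Suc.IH[OF card(2)] near Suc.prems(2) k assms Det_on_nonneg
    by (intro add_mono mult_mono) auto
  also have "\<rho> * ?F (S - {k}) \<le> ?F S"
  proof -
    have "card (S - T) = Suc (card (S - {k} - T))" if "T \<in> Pow (S - {k})" for T
    proof -
      have "S - T = insert k (S - {k} - T)" using that k by auto
      then show ?thesis using that by simp
    qed
    then have "\<rho> * ?F (S - {k}) = (\<Sum>T\<in>Pow (S - {k}). \<rho> ^ card (S - T) * Det_on T y)"
      unfolding sum_distrib_left by (intro sum.cong) simp_all
    also have "\<dots> \<le> ?F S"
      by (rule sum_mono2) (use assms Det_on_nonneg in \<open>auto intro!: mult_nonneg_nonneg\<close>)
    finally show ?thesis .
  qed
  then have "\<rho> * (2 ^ m * ?F (S - {k})) \<le> 2 ^ m * ?F S"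
    by (simp add: mult.left_commute)
  finally show ?case by simp
qed

lemma Det_on_perturb_le:
  fixes y z :: "'n::finite \<Rightarrow> 'a::euclidean_space"
  assumes "0 \<le> \<rho>" "\<forall>i. norm (z i - y i) \<le> \<rho>"
  shows "Det_on UNIV z \<le> 2 ^ CARD('n) * (\<Sum>T\<in>Pow UNIV. \<rho> ^ card (UNIV - T) * Det_on T y)"
proof -
  have "Det_on UNIV z \<le> 2 ^ card {i\<in>UNIV. z i \<noteq> y i} * (\<Sum>T\<in>Pow UNIV. \<rho> ^ card (UNIV - T) * Det_on T y)"
    using Det_on_perturb_le_card[OF assms(1)] assms(2) by blast
  also have "\<dots> \<le> 2 ^ CARD('n) * (\<Sum>T\<in>Pow UNIV. \<rho> ^ card (UNIV - T) * Det_on T y)"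
    by (intro mult_right_mono power_increasing sum_nonneg)
       (use assms Det_on_nonneg in \<open>auto intro: card_mono intro!: mult_nonneg_nonneg\<close>)
  finally show ?thesis .
qed

section \<open>The uniform measure on the sphere\<close>

definition sphere_cone :: "'a::euclidean_space set \<Rightarrow> 'a set" where
  "sphere_cone A = {t *\<^sub>R x | t x. 0 < t \<and> t \<le> 1 \<and> x \<in> A}"

lemma sphere_cone_eq:
  fixes A :: "'a::euclidean_space set"
  assumes "A \<subseteq> sphere 0 1"
  shows "sphere_cone A = {w. w \<noteq> 0 \<and> norm w \<le> 1 \<and> sgn w \<in> A}"
proof (intro set_eqI iffI)
  fix w assume "w \<in> sphere_cone A"
  then obtain t x where w: "w = t *\<^sub>R x" "0 < t" "t \<le> 1" "x \<in> A" unfolding sphere_cone_def by auto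
  moreover have "norm x = 1" using w(4) assms by auto
  ultimately show "w \<in> {w. w \<noteq> 0 \<and> norm w \<le> 1 \<and> sgn w \<in> A}" by (auto simp: sgn_div_norm)
next
  fix w :: 'a assume w: "w \<in> {w. w \<noteq> 0 \<and> norm w \<le> 1 \<and> sgn w \<in> A}"
  then have "w = norm w *\<^sub>R sgn w" by (simp add: sgn_div_norm)
  then show "w \<in> sphere_cone A" unfolding sphere_cone_def using w by force
qed

lemma sphere_cone_UN: "sphere_cone (\<Union>i. A i) = (\<Union>i. sphere_cone (A i))"
  unfolding sphere_cone_def by blast

lemma sets_restrict_sphere_iff:
  "A \<in> sets (restrict_space borel (sphere (0::'a::euclidean_space) 1)) \<longleftrightarrow>
    A \<subseteq> sphere 0 1 \<and> A \<in> sets borel"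
  by (rule sets_restrict_space_iff) (simp add: closed_sphere)

lemma sphere_cone_borel:
  fixes A :: "'a::euclidean_space set"
  assumes "A \<in> sets (restrict_space borel (sphere (0::'a) 1))"
  shows "sphere_cone A \<in> sets borel"
proof -
  have A: "A \<subseteq> sphere 0 1" "A \<in> sets borel" using assms sets_restrict_sphere_iff by auto
  have "sphere_cone A = {w. w \<noteq> 0} \<inter> {w. norm w \<le> 1} \<inter> sgn -` A"
    using sphere_cone_eq[OF A(1)] by auto
  also have "\<dots> \<in> sets borel"
    using A(2) by (intro sets.Int) (auto intro!: measurable_sets_borel[OF borel_measurable_sgn])
  finally show ?thesis .
qed

lemma sigma_algebra_restrict_sphere:
  "sigma_algebra (sphere (0::'a::euclidean_space) 1) (sets (restrict_space borel (sphere (0::'a) 1)))"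
  using sets.sigma_algebra_axioms[of "restrict_space borel (sphere (0::'a) 1)"]
  by (simp add: space_restrict_space)

lemma sets_sphere_measure:
  "sets (sphere_measure :: 'a::euclidean_space measure) = sets (restrict_space borel (sphere (0::'a) 1))"
proof -
  interpret sigma_algebra "sphere (0::'a) 1" "sets (restrict_space borel (sphere (0::'a) 1))"
    by (rule sigma_algebra_restrict_sphere)
  show ?thesis unfolding sphere_measure_def
    by (subst sets_measure_of[OF space_closed]) (simp add: sigma_sets_eq)
qed

lemma space_sphere_measure: "space (sphere_measure :: 'a::euclidean_space measure) = sphere 0 1"
proof -
  have "sets (restrict_space borel (sphere (0::'a) 1)) \<subseteq> Pow (sphere 0 1)"
    using sets.space_closed[of "restrict_space borel (sphere (0::'a) 1)"]
    by (simp add: space_restrict_space)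
  then show ?thesis unfolding sphere_measure_def by (simp add: space_measure_of_conv)
qed

lemma emeasure_sphere_measure:
  fixes A :: "'a::euclidean_space set"
  assumes "A \<in> sets sphere_measure"
  shows "emeasure sphere_measure A = emeasure lborel (sphere_cone A) / emeasure lborel (ball (0::'a) 1)"
proof -
  let ?\<mu> = "\<lambda>A::'a set. emeasure lborel (sphere_cone A) / emeasure lborel (ball (0::'a) 1)"
  let ?M = "sets (restrict_space borel (sphere (0::'a) 1))"
  have "countably_additive ?M ?\<mu>"
  proof (rule countably_additiveI)
    fix A :: "nat \<Rightarrow> 'a set"
    assume A: "range A \<subseteq> ?M" "disjoint_family A"
    have sphere: "A i \<subseteq> sphere 0 1" for i using A(1) sets_restrict_sphere_iff by blast
    have "disjoint_family (\<lambda>i. sphere_cone (A i))"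
      using A(2) unfolding disjoint_family_on_def sphere_cone_eq[OF sphere] by blast
    moreover have "range (\<lambda>i. sphere_cone (A i)) \<subseteq> sets lborel" using A(1) sphere_cone_borel by auto
    ultimately have "(\<Sum>i. emeasure lborel (sphere_cone (A i))) = emeasure lborel (\<Union>i. sphere_cone (A i))"
      by (intro suminf_emeasure)
    then show "(\<Sum>i. ?\<mu> (A i)) = ?\<mu> (\<Union>i. A i)"
      by (simp add: ennreal_suminf_divide sphere_cone_UN)
  qed
  moreover have "A \<in> ?M" using assms by (simp add: sets_sphere_measure)
  ultimately have "emeasure sphere_measure A = ?\<mu> A"
    unfolding sphere_measure_def sphere_cone_def[symmetric]
    by (intro emeasure_measure_of_sigma[OF sigma_algebra_restrict_sphere]) (auto simp: positive_def sphere_cone_def)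
  then show ?thesis by simp
qed

lemma emeasure_sphere_measure_le_1:
  assumes "A \<in> sets sphere_measure"
  shows "emeasure (sphere_measure :: 'a::euclidean_space measure) A \<le> 1"
proof -
  have "A \<subseteq> sphere 0 1" using sets.sets_into_space[OF assms] by (simp add: space_sphere_measure)
  then have "sphere_cone A \<subseteq> cball 0 1" by (auto simp: sphere_cone_eq dist_norm)
  then have "emeasure lborel (sphere_cone A) \<le> emeasure lborel (cball (0::'a) 1)"
    by (rule emeasure_mono) simp
  also have "\<dots> = emeasure lborel (ball (0::'a) 1)"
    by (simp add: emeasure_ball emeasure_cball)
  finally show ?thesis
    using emeasure_sphere_measure[OF assms]
    by (simp add: divide_le_posI_ennreal emeasure_ball unit_ball_vol_pos)
qed

lemma finite_measure_sphere_measure: "finite_measure (sphere_measure :: 'a::euclidean_space measure)"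
proof (rule finite_measureI)
  have "emeasure (sphere_measure :: 'a measure) (space sphere_measure) \<le> 1"
    by (rule emeasure_sphere_measure_le_1) simp
  then show "emeasure (sphere_measure :: 'a measure) (space sphere_measure) \<noteq> \<infinity>"
    using ennreal_one_less_top by (auto simp: top_unique)
qed

lemma borel_measurable_sphere_measure:
  assumes "f \<in> borel_measurable borel"
  shows "f \<in> borel_measurable (sphere_measure :: 'a::euclidean_space measure)"
proof -
  have "f \<in> borel_measurable (restrict_space borel (sphere (0::'a) 1))"
    using assms by (rule measurable_restrict_space1)
  then show ?thesis
    by (subst measurable_cong_sets[where M' = "restrict_space borel (sphere (0::'a) 1)"])
      (simp_all add: sets_sphere_measure)
qed

lemma borel_measurable_infdist_sphere_measure:
  "(\<lambda>t. infdist t A) \<in> borel_measurable (sphere_measure :: 'a::euclidean_space measure)"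
  by (intro borel_measurable_sphere_measure borel_measurable_continuous_onI continuous_on_infdist
      continuous_on_id)

lemma product_sigma_finite_sphere_measure:
  "product_sigma_finite (\<lambda>_::'n. sphere_measure :: 'a::euclidean_space measure)"
  unfolding product_sigma_finite_def using finite_measure_sphere_measure finite_measure.axioms(1) by blast

section \<open>Spherical caps\<close>

lemma arccos_less_iff:
  "-1 \<le> (c::real) \<Longrightarrow> c \<le> 1 \<Longrightarrow> 0 < r \<Longrightarrow> r \<le> pi \<Longrightarrow> arccos c < r \<longleftrightarrow> cos r < c"
  by (smt (verit) arccos cos_mono_less_eq)

lemma inner_unit_bounds:
  fixes z y :: "'a::real_inner"
  assumes "norm z = 1" "norm y = 1"
  shows "-1 \<le> z \<bullet> y" "z \<bullet> y \<le> 1"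
  using Cauchy_Schwarz_ineq2[of z y] assms by auto

lemma norm_diff_unit_sq:
  fixes z y :: "'a::real_inner"
  assumes "norm z = 1" "norm y = 1"
  shows "(norm (y - z))\<^sup>2 = 2 - 2 * (z \<bullet> y)"
  using assms by (simp add: power2_norm_eq_inner inner_diff_left inner_diff_right inner_commute norm_eq_1)

lemma sph_cap_eq:
  fixes z :: "'a::euclidean_space"
  assumes z: "norm z = 1" and r: "0 < r"
  shows "sph_cap r z = sphere 0 1 \<inter> {y. pi < r \<or> cos r < z \<bullet> y}"
proof (intro set_eqI)
  fix y :: 'a
  show "y \<in> sph_cap r z \<longleftrightarrow> y \<in> sphere 0 1 \<inter> {y. pi < r \<or> cos r < z \<bullet> y}"
  proof (cases "y \<in> sphere 0 1")
    case True
    then have bounds: "-1 \<le> z \<bullet> y" "z \<bullet> y \<le> 1" using inner_unit_bounds[OF z] by auto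
    then have "arccos (z \<bullet> y) \<le> pi" using arccos_ubound by blast
    then show ?thesis
      using True arccos_less_iff[OF bounds r] by (cases "pi < r") (auto simp: sph_cap_def sph_dist_def)
  qed (simp add: sph_cap_def)
qed

lemma sph_cap_sets:
  fixes z :: "'a::euclidean_space"
  assumes "norm z = 1" and "0 < r"
  shows "sph_cap r z \<in> sets (sphere_measure :: 'a measure)"
  unfolding sph_cap_eq[OF assms] sets_sphere_measure sets_restrict_sphere_iff by auto

lemma norm_diff_le_arccos_inner:
  fixes z y :: "'a::real_inner"
  assumes z: "norm z = 1" and y: "norm y = 1"
  shows "norm (y - z) \<le> arccos (z \<bullet> y)"
proof -
  define \<theta> where "\<theta> = arccos (z \<bullet> y)"
  have \<theta>: "0 \<le> \<theta>" "cos \<theta> = z \<bullet> y" using inner_unit_bounds[OF z y] arccos by (auto simp: \<theta>_def)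
  have "(norm (y - z))\<^sup>2 = 4 * (sin (\<theta>/2))\<^sup>2"
    unfolding norm_diff_unit_sq[OF z y] using \<theta>(2) by (smt (verit) cos_double_sin field_sum_of_halves)
  also have "\<dots> \<le> 4 * (\<theta>/2)\<^sup>2"
    using abs_sin_x_le_abs_x[of "\<theta>/2"] \<theta>(1) by (simp add: power2_le_iff_abs_le abs_le_square_iff)
  also have "\<dots> = \<theta>\<^sup>2" by (simp add: power2_eq_square)
  finally show ?thesis using \<theta>(1) power2_le_imp_le unfolding \<theta>_def by blast
qed

lemma sph_cap_norm_diff_le:
  fixes z y :: "'a::euclidean_space"
  assumes z: "norm z = 1" and y: "y \<in> sph_cap r z"
  shows "norm (y - z) \<le> min r 2"
proof -
  have ny: "norm y = 1" using y by (simp add: sph_cap_def)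
  have "norm (y - z) \<le> r" using norm_diff_le_arccos_inner[OF z ny] y by (simp add: sph_cap_def sph_dist_def)
  moreover have "norm (y - z) \<le> 2" using norm_triangle_ineq4[of y z] ny z by simp
  ultimately show ?thesis by simp
qed

lemma sin_ge_half: "0 \<le> x \<Longrightarrow> x \<le> 1 \<Longrightarrow> x / 2 \<le> sin (x::real)"
proof -
  assume x: "0 \<le> x" "x \<le> 1"
  have "\<bar>sin x - (\<Sum>m<3. sin_coeff m * x ^ m)\<bar> \<le> inverse (fact 3) * \<bar>x\<bar> ^ 3"
    by (rule Maclaurin_sin_bound)
  moreover have "(\<Sum>m<3. sin_coeff m * x ^ m) = x" by (simp add: sin_coeff_def numeral_3_eq_3)
  moreover have "x * (x * x) \<le> x" using x by (intro mult_right_le_one_le) (auto intro: mult_le_one)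
  then have "x ^ 3 \<le> x" by (simp add: power3_eq_cube mult.assoc)
  ultimately have "\<bar>sin x - x\<bar> \<le> x / 6" using x by (simp add: fact_numeral)
  then show ?thesis using x unfolding abs_le_iff by linarith
qed

lemma cos_le_1_minus_sq_div_8: "0 \<le> x \<Longrightarrow> x \<le> 1 \<Longrightarrow> cos (x::real) \<le> 1 - x\<^sup>2 / 8"
proof -
  assume x: "0 \<le> x" "x \<le> 1"
  have "(x/4)\<^sup>2 \<le> (sin (x/2))\<^sup>2" using sin_ge_half[of "x/2"] x by (intro power_mono) auto
  moreover have "cos x = 1 - 2 * (sin (x/2))\<^sup>2" by (smt (verit) cos_double_sin field_sum_of_halves)
  ultimately show ?thesis by (simp add: power2_eq_square)
qed

lemma norm_sgn_diff_le:
  fixes w v :: "'a::real_normed_vector"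
  assumes v: "v \<noteq> 0" and w: "w \<noteq> 0"
  shows "norm (sgn w - sgn v) \<le> 2 * norm (w - v) / norm v"
proof -
  have "sgn w - sgn v = (w /\<^sub>R norm w - w /\<^sub>R norm v) + (w - v) /\<^sub>R norm v"
    by (simp add: sgn_div_norm algebra_simps)
  then have "norm (sgn w - sgn v) \<le> norm (w /\<^sub>R norm w - w /\<^sub>R norm v) + norm (w - v) / norm v"
    using norm_triangle_ineq by (metis norm_scaleR abs_inverse abs_norm_cancel divide_inverse_commute)
  also have "w /\<^sub>R norm w - w /\<^sub>R norm v = ((norm v - norm w) / (norm w * norm v)) *\<^sub>R w"
    using v w by (simp add: field_simps scaleR_diff_left[symmetric] divide_simps)
  also have "norm \<dots> = \<bar>norm v - norm w\<bar> / norm v"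
    using v w by (simp add: abs_mult)
  also have "\<bar>norm v - norm w\<bar> \<le> norm (w - v)" by (metis norm_triangle_ineq3 norm_minus_commute)
  then have "\<bar>norm v - norm w\<bar> / norm v \<le> norm (w - v) / norm v" by (simp add: divide_right_mono)
  finally show ?thesis by simp
qed

lemma ball_subset_sphere_cone_sph_cap:
  fixes z :: "'a::euclidean_space"
  assumes z: "norm z = 1" and r: "0 < r" and t: "1/2 \<le> t" "t \<le> 3/4"
  shows "ball (t *\<^sub>R z) (min r 1 / 16) \<subseteq> sphere_cone (sph_cap r z)"
proof
  define \<rho> where "\<rho> = min r 1"
  have \<rho>: "0 < \<rho>" "\<rho> \<le> 1" "\<rho> \<le> r" using r by (auto simp: \<rho>_def)
  fix w assume "w \<in> ball (t *\<^sub>R z) (min r 1 / 16)"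
  then have dw: "norm (w - t *\<^sub>R z) < \<rho> / 16" by (simp add: dist_norm norm_minus_commute \<rho>_def)
  have ntz: "norm (t *\<^sub>R z) = t" using z t by simp
  have "norm w \<le> 1" "0 < norm w"
    using norm_triangle_ineq2[of w "t *\<^sub>R z"] norm_triangle_ineq3[of w "t *\<^sub>R z"] dw ntz \<rho> t by auto
  then have w: "w \<noteq> 0" "norm w \<le> 1" by auto
  define x where "x = sgn w"
  have nx: "norm x = 1" using w by (simp add: x_def norm_sgn)
  have "t *\<^sub>R z \<noteq> 0" "sgn (t *\<^sub>R z) = z" using t z ntz by (auto simp: sgn_div_norm)
  then have "norm (x - z) \<le> 2 * norm (w - t *\<^sub>R z) / t"
    using norm_sgn_diff_le[of "t *\<^sub>R z" w] w ntz by (simp add: x_def)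
  also have "\<dots> \<le> 2 * (\<rho> / 16) / (1/2)"
    using dw t \<rho> by (intro frac_le) auto
  finally have "(norm (x - z))\<^sup>2 \<le> (\<rho>/4)\<^sup>2"
    by (intro power_mono) auto
  then have "1 - \<rho>\<^sup>2 / 32 \<le> z \<bullet> x"
    unfolding norm_diff_unit_sq[OF z nx] by (simp add: power2_eq_square)
  moreover have "cos \<rho> \<le> 1 - \<rho>\<^sup>2 / 8" using cos_le_1_minus_sq_div_8 \<rho> by simp
  moreover have "0 < \<rho>\<^sup>2" using \<rho> by simp
  ultimately have "cos \<rho> < z \<bullet> x" by linarith
  then have "arccos (z \<bullet> x) < \<rho>"
    using arccos_less_iff[OF inner_unit_bounds[OF z nx] \<rho>(1)] \<rho> pi_gt3 by linarith
  then have "x \<in> sph_cap r z" using nx \<rho> by (simp add: sph_cap_def sph_dist_def)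
  moreover have "sph_cap r z \<subseteq> sphere 0 1" by (auto simp: sph_cap_def)
  ultimately show "w \<in> sphere_cone (sph_cap r z)" using sphere_cone_eq w by (auto simp: x_def)
qed

lemma disjoint_family_on_balls_on_ray:
  fixes z :: "'a::real_normed_vector"
  assumes "norm z = 1" and "0 \<le> h"
  shows "disjoint_family_on (\<lambda>j. ball ((a + 2 * h * real j) *\<^sub>R z) h) (J :: nat set)"
  unfolding disjoint_family_on_def
proof (intro ballI impI disjoint_ballI)
  fix i j :: nat assume "i \<noteq> j"
  then have "1 \<le> \<bar>real i - real j\<bar>" by linarith
  moreover have "(a + 2 * h * real i) *\<^sub>R z - (a + 2 * h * real j) *\<^sub>R z = (2 * h * (real i - real j)) *\<^sub>R z"
    by (simp add: algebra_simps)
  ultimately show "h + h \<le> dist ((a + 2 * h * real i) *\<^sub>R z) ((a + 2 * h * real j) *\<^sub>R z)"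
    using assms by (simp add: dist_norm abs_mult mult_le_cancel_left1)
qed

text \<open>The cone over a cap of radius \<rho> contains about 1/\<rho> disjoint balls of radius \<rho>/16
  stacked along its axis, hence has volume at least of order \<rho>^(d-1).\<close>
lemma emeasure_sphere_cone_sph_cap_ge:
  fixes z :: "'a::euclidean_space"
  assumes z: "norm z = 1" and r: "0 < r"
  shows "ennreal (unit_ball_vol DIM('a) * (min r 2 / 32) ^ (DIM('a) - 1) / 16)
           \<le> emeasure lborel (sphere_cone (sph_cap r z))"
proof -
  define h where "h = min r 1 / 16"
  define N where "N = nat \<lfloor>1 / (8 * h)\<rfloor>"
  define v where "v = unit_ball_vol DIM('a)"
  define F where "F j = ball ((1/2 + 2 * h * real j) *\<^sub>R z) h" for j
  have h: "0 < h" "h \<le> 1/16" using r by (auto simp: h_def)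
  have v: "0 < v" using unit_ball_vol_pos by (simp add: v_def)
  have "0 \<le> \<lfloor>1 / (8 * h)\<rfloor>" using h by simp
  then have N: "1 / (8 * h) - 1 \<le> real N" "real N \<le> 1 / (8 * h)"
    unfolding N_def using floor_correct[of "1 / (8 * h)"] by linarith+
  have "v * (min r 2 / 32) ^ (DIM('a) - 1) / 16 \<le> v * h ^ (DIM('a) - 1) / 16"
    using v h r by (intro divide_right_mono mult_left_mono power_mono) (auto simp: h_def)
  also have "\<dots> = 1 / 16 * (v * h ^ (DIM('a) - 1))" by simp
  also have "\<dots> \<le> (real N * h) * (v * h ^ (DIM('a) - 1))"
    using N h v by (intro mult_right_mono) (auto simp: field_simps)
  also have "\<dots> = real N * (v * h ^ DIM('a))"
  proof -
    have "h ^ DIM('a) = h * h ^ (DIM('a) - 1)" by (metis DIM_positive Suc_diff_1 power_Suc)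
    then show ?thesis by (simp add: ac_simps)
  qed
  finally have "ennreal (v * (min r 2 / 32) ^ (DIM('a) - 1) / 16) \<le> ennreal (real N * (v * h ^ DIM('a)))"
    by (rule ennreal_leI)
  also have "\<dots> = (\<Sum>j<N. emeasure lborel (F j))"
    using h by (simp add: F_def emeasure_ball v_def ennreal_of_nat_eq_real_of_nat ennreal_mult'[symmetric])
  also have "\<dots> = emeasure lborel (\<Union>j<N. F j)"
    using disjoint_family_on_balls_on_ray[OF z, of h] h unfolding F_def by (intro sum_emeasure) auto
  also have "\<dots> \<le> emeasure lborel (sphere_cone (sph_cap r z))"
  proof (intro emeasure_mono UN_least)
    fix j assume "j \<in> {..<N}"
    then have "2 * h * real j \<le> 2 * h * (1 / (8 * h))" using N h by (intro mult_left_mono) auto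
    also have "\<dots> = 1/4" using h by simp
    finally show "F j \<subseteq> sphere_cone (sph_cap r z)"
      using ball_subset_sphere_cone_sph_cap[OF z r, of "1/2 + 2 * h * real j"] h
      unfolding F_def h_def[symmetric] by auto
  qed (use sphere_cone_borel sph_cap_sets[OF z r] in \<open>auto simp: sets_sphere_measure\<close>)
  finally show ?thesis by (simp add: v_def)
qed

lemma emeasure_sph_cap_ge:
  fixes z :: "'a::euclidean_space"
  assumes z: "norm z = 1" and r: "0 < r"
  shows "ennreal ((min r 2 / 32) ^ (DIM('a) - 1) / 16) \<le> emeasure sphere_measure (sph_cap r z)"
proof -
  define v where "v = unit_ball_vol DIM('a)"
  have v: "0 < v" by (simp add: v_def unit_ball_vol_pos)
  have "ennreal ((min r 2 / 32) ^ (DIM('a) - 1) / 16)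
      = ennreal (v * (min r 2 / 32) ^ (DIM('a) - 1) / 16) / ennreal v"
    using v r by (simp add: divide_ennreal)
  also have "\<dots> \<le> emeasure lborel (sphere_cone (sph_cap r z)) / ennreal v"
    using emeasure_sphere_cone_sph_cap_ge[OF z r] by (intro divide_right_mono_ennreal) (simp add: v_def)
  also have "\<dots> = emeasure sphere_measure (sph_cap r z)"
    using emeasure_sphere_measure[OF sph_cap_sets[OF z r]] by (simp add: emeasure_ball v_def)
  finally show ?thesis .
qed

section \<open>Tubes around subspaces\<close>

definition orthonormal_basis :: "'a::euclidean_space set \<Rightarrow> bool" where
  "orthonormal_basis B \<longleftrightarrow> finite B \<and> (\<forall>b\<in>B. norm b = 1) \<and> pairwise orthogonal B \<and> span B = UNIV"

lemma orthonormal_basis_card: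
  fixes B :: "'a::euclidean_space set"
  assumes "orthonormal_basis B"
  shows "card B = DIM('a)"
proof -
  have "independent B"
    using assms pairwise_orthogonal_independent by (force simp: orthonormal_basis_def)
  then have "dim B = card B" by (rule dim_eq_card_independent)
  moreover have "dim B = DIM('a)" using assms dim_span[of B] by (simp add: orthonormal_basis_def)
  ultimately show ?thesis by simp
qed

lemma orthonormal_basis_norm_sum_sq:
  assumes "orthonormal_basis B"
  shows "(norm (\<Sum>b\<in>B. a b *\<^sub>R b))\<^sup>2 = (\<Sum>b\<in>B. (a b)\<^sup>2)"
proof -
  have "pairwise (\<lambda>b c. orthogonal (a b *\<^sub>R b) (a c *\<^sub>R c)) B"
    using assms pairwise_ortho_scaleR[of "\<lambda>b. b" "\<lambda>b. b" B a] by (simp add: orthonormal_basis_def)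
  then show ?thesis
    using assms by (simp add: norm_sum_Pythagorean orthonormal_basis_def power_mult_distrib)
qed

lemma orthonormal_basis_extend:
  fixes S :: "'a::euclidean_space set"
  assumes S: "pairwise orthogonal S" "\<And>s. s \<in> S \<Longrightarrow> norm s = 1"
  obtains B where "S \<subseteq> B" "orthonormal_basis B"
proof -
  obtain U where U: "pairwise orthogonal (S \<union> U)" "span (S \<union> U) = span (S \<union> UNIV)"
    using orthogonal_extension[OF S(1)] by blast
  define W where "W = (S \<union> U) - {0}"
  have fW: "finite W" using pairwise_orthogonal_imp_finite[OF U(1)] by (simp add: W_def)
  define B where "B = (\<lambda>x. (1 / norm x) *\<^sub>R x) ` W"
  have "S \<subseteq> B"
  proof
    fix s assume s: "s \<in> S"
    then have "s \<in> W" "(1 / norm s) *\<^sub>R s = s" using S(2)[OF s] by (auto simp: W_def)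
    then show "s \<in> B" unfolding B_def by force
  qed
  moreover have "span B = UNIV"
  proof -
    have "span B = span W" unfolding B_def by (rule span_image_scale[OF fW]) (auto simp: W_def)
    also have "\<dots> = span (S \<union> U)" unfolding W_def by (simp add: span_delete_0)
    finally show ?thesis using U(2) by (simp add: span_UNIV)
  qed
  moreover have "pairwise orthogonal B"
    unfolding pairwise_def B_def
  proof clarify
    fix x y assume xy: "x \<in> W" "y \<in> W" "(1 / norm x) *\<^sub>R x \<noteq> (1 / norm y) *\<^sub>R y"
    then have "x \<noteq> y" by auto
    then have "orthogonal x y" using U(1) xy by (auto simp: W_def pairwise_def)
    then show "orthogonal ((1 / norm x) *\<^sub>R x) ((1 / norm y) *\<^sub>R y)" by (simp add: orthogonal_clauses)
  qed
  moreover have "finite B" "\<forall>b\<in>B. norm b = 1" using fW by (auto simp: B_def W_def)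
  ultimately show ?thesis using that by (auto simp: orthonormal_basis_def)
qed

lemma orthonormal_basis_dist_sum_less:
  assumes B: "orthonormal_basis B" and h: "0 < h" and c: "\<And>b. b \<in> B \<Longrightarrow> \<bar>w \<bullet> b - c b\<bar> \<le> h / 2"
  shows "dist w (\<Sum>b\<in>B. c b *\<^sub>R b) < h * sqrt (card B)"
proof -
  have "w - (\<Sum>b\<in>B. c b *\<^sub>R b) = (\<Sum>b\<in>B. (w \<bullet> b - c b) *\<^sub>R b)"
    using orthonormal_basis_expand[of B w] B
    by (simp add: orthonormal_basis_def scaleR_diff_left sum_subtractf)
  then have "(dist w (\<Sum>b\<in>B. c b *\<^sub>R b))\<^sup>2 = (\<Sum>b\<in>B. (w \<bullet> b - c b)\<^sup>2)"
    using orthonormal_basis_norm_sum_sq[OF B] by (simp add: dist_norm)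
  also have "\<dots> \<le> (\<Sum>b\<in>B. (h / 2)\<^sup>2)"
  proof (rule sum_mono)
    fix b assume "b \<in> B"
    then have "\<bar>w \<bullet> b - c b\<bar> \<le> \<bar>h / 2\<bar>" using c h by simp
    then show "(w \<bullet> b - c b)\<^sup>2 \<le> (h / 2)\<^sup>2" by (simp only: abs_le_square_iff)
  qed
  also have "\<dots> < (h * sqrt (card B))\<^sup>2"
    using h orthonormal_basis_card[OF B] by (simp add: power_mult_distrib power_divide)
  finally show ?thesis using h by (simp add: power2_less_imp_less)
qed

lemma box_subset_UN_lattice_balls:
  fixes B :: "'a::euclidean_space set"
  assumes B: "orthonormal_basis B" and h: "0 < h"
  shows "{w. \<forall>b\<in>B. \<bar>w \<bullet> b\<bar> \<le> \<beta> b}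
    \<subseteq> (\<Union>k\<in>PiE B (\<lambda>b. {-\<lceil>\<beta> b / h\<rceil>..\<lceil>\<beta> b / h\<rceil>}).
          ball (\<Sum>b\<in>B. (h * of_int (k b)) *\<^sub>R b) (h * sqrt (card B)))"
proof
  fix w assume "w \<in> {w. \<forall>b\<in>B. \<bar>w \<bullet> b\<bar> \<le> \<beta> b}"
  then have wb: "\<And>b. b \<in> B \<Longrightarrow> \<bar>w \<bullet> b\<bar> \<le> \<beta> b" by simp
  define k where "k b = (if b \<in> B then round ((w \<bullet> b) / h) else undefined)" for b
  have "k \<in> PiE B (\<lambda>b. {-\<lceil>\<beta> b / h\<rceil>..\<lceil>\<beta> b / h\<rceil>})"
  proof (rule PiE_I)
    fix b assume b: "b \<in> B"
    have "- (\<beta> b / h) \<le> (w \<bullet> b) / h" "(w \<bullet> b) / h \<le> \<beta> b / h"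
      using wb[OF b] h by (simp_all add: abs_le_iff field_simps)
    then have "round (- (\<beta> b / h)) \<le> k b" "k b \<le> round (\<beta> b / h)"
      using b by (simp_all add: k_def round_mono)
    then show "k b \<in> {-\<lceil>\<beta> b / h\<rceil>..\<lceil>\<beta> b / h\<rceil>}"
      using floor_le_round[of "- (\<beta> b / h)"] ceiling_ge_round[of "\<beta> b / h"]
      unfolding floor_minus by simp
  qed (simp add: k_def)
  moreover have "\<bar>w \<bullet> b - h * of_int (k b)\<bar> \<le> h / 2" if "b \<in> B" for b
  proof -
    have "\<bar>w \<bullet> b - h * of_int (k b)\<bar> = h * \<bar>of_int (round ((w \<bullet> b) / h)) - (w \<bullet> b) / h\<bar>"
      using that h by (simp add: k_def abs_minus_commute abs_mult_pos' right_diff_distrib)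
    then show ?thesis using of_int_round_abs_le[of "(w \<bullet> b) / h"] h by simp
  qed
  then have "w \<in> ball (\<Sum>b\<in>B. (h * of_int (k b)) *\<^sub>R b) (h * sqrt (card B))"
    using orthonormal_basis_dist_sum_less[OF B h] by (simp add: dist_commute)
  ultimately show "w \<in> (\<Union>k\<in>PiE B (\<lambda>b. {-\<lceil>\<beta> b / h\<rceil>..\<lceil>\<beta> b / h\<rceil>}).
      ball (\<Sum>b\<in>B. (h * of_int (k b)) *\<^sub>R b) (h * sqrt (card B)))" by blast
qed

lemma emeasure_box_le:
  fixes B :: "'a::euclidean_space set"
  assumes B: "orthonormal_basis B" and h: "0 < h" and \<beta>: "\<And>b. b \<in> B \<Longrightarrow> h \<le> \<beta> b"
  shows "emeasure lborel {w. \<forall>b\<in>B. \<bar>w \<bullet> b\<bar> \<le> \<beta> b}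
     \<le> ennreal ((\<Prod>b\<in>B. 5 * \<beta> b / h) * (unit_ball_vol DIM('a) * (h * sqrt (card B)) ^ DIM('a)))"
proof -
  define KS where "KS = PiE B (\<lambda>b. {-\<lceil>\<beta> b / h\<rceil>..\<lceil>\<beta> b / h\<rceil>})"
  define R where "R = h * sqrt (card B)"
  have fB: "finite B" using B by (simp add: orthonormal_basis_def)
  have card_KS: "real (card KS) \<le> (\<Prod>b\<in>B. 5 * \<beta> b / h)"
  proof -
    have "real (card KS) = (\<Prod>b\<in>B. real (nat (2 * \<lceil>\<beta> b / h\<rceil> + 1)))"
      unfolding KS_def using fB by (simp add: card_PiE)
    also have "\<dots> \<le> (\<Prod>b\<in>B. 5 * \<beta> b / h)"
    proof (rule prod_mono)
      fix b assume "b \<in> B"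
      then have "1 \<le> \<beta> b / h" using \<beta> h by simp
      moreover have "of_int \<lceil>\<beta> b / h\<rceil> < \<beta> b / h + 1" by linarith
      ultimately show "0 \<le> real (nat (2 * \<lceil>\<beta> b / h\<rceil> + 1)) \<and> real (nat (2 * \<lceil>\<beta> b / h\<rceil> + 1)) \<le> 5 * \<beta> b / h"
        by linarith
    qed
    finally show ?thesis .
  qed
  have "emeasure lborel {w. \<forall>b\<in>B. \<bar>w \<bullet> b\<bar> \<le> \<beta> b}
      \<le> emeasure lborel (\<Union>k\<in>KS. ball (\<Sum>b\<in>B. (h * of_int (k b)) *\<^sub>R b) R)"
    using box_subset_UN_lattice_balls[OF B h] unfolding KS_def R_def by (rule emeasure_mono) (auto intro!: borel_open)
  also have "\<dots> \<le> (\<Sum>k\<in>KS. emeasure lborel (ball (\<Sum>b\<in>B. (h * of_int (k b)) *\<^sub>R b) R))"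
    using fB by (intro emeasure_subadditive_finite) (auto simp: KS_def intro: finite_PiE)
  also have "\<dots> = ennreal (real (card KS) * (unit_ball_vol DIM('a) * R ^ DIM('a)))"
    using h by (simp add: emeasure_ball R_def ennreal_of_nat_eq_real_of_nat ennreal_mult'[symmetric])
  also have "\<dots> \<le> ennreal ((\<Prod>b\<in>B. 5 * \<beta> b / h) * (unit_ball_vol DIM('a) * R ^ DIM('a)))"
    using card_KS h by (intro ennreal_leI mult_right_mono) (auto simp: R_def unit_ball_vol_pos less_imp_le)
  finally show ?thesis unfolding R_def .
qed

lemma unit_orthogonal_to_span_exists:
  fixes Y :: "'a::euclidean_space set"
  assumes "dim Y < DIM('a)"
  obtains u where "norm u = 1" "\<And>y. y \<in> span Y \<Longrightarrow> orthogonal u y"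
proof -
  obtain x where "x \<noteq> 0" "\<And>y. y \<in> span Y \<Longrightarrow> orthogonal x y"
    using orthogonal_to_subspace_exists[OF assms] by blast
  then show ?thesis
    using that[of "(1 / norm x) *\<^sub>R x"] by (auto simp: orthogonal_clauses)
qed

lemma abs_inner_le_infdist_span:
  fixes u x :: "'a::euclidean_space"
  assumes u: "norm u = 1" and orth: "\<And>v. v \<in> span X \<Longrightarrow> orthogonal u v"
  shows "\<bar>x \<bullet> u\<bar> \<le> infdist x (span X)"
proof -
  have "\<bar>x \<bullet> u\<bar> \<le> dist x a" if a: "a \<in> span X" for a
  proof -
    have "x \<bullet> u = (x - a) \<bullet> u"
      using orth[OF a] by (simp add: orthogonal_def inner_diff_left inner_diff_right inner_commute)
    then show ?thesis using u Cauchy_Schwarz_ineq2[of "x - a" u] by (simp add: dist_norm)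
  qed
  then show ?thesis unfolding infdist_def using span_zero by (auto intro!: cINF_greatest)
qed

lemma abs_inner_sph_cap_le:
  fixes z x b :: "'a::euclidean_space"
  assumes z: "norm z = 1" and x: "x \<in> sph_cap r z" and b: "norm b = 1" "b \<bullet> z = 0"
  shows "\<bar>x \<bullet> b\<bar> \<le> min r 2"
proof -
  have "x \<bullet> b = (x - z) \<bullet> b" using b(2) by (simp add: inner_diff_left inner_diff_right inner_commute)
  then have "\<bar>x \<bullet> b\<bar> \<le> norm (x - z)" using Cauchy_Schwarz_ineq2[of "x - z" b] b(1) by simp
  then show ?thesis using sph_cap_norm_diff_le[OF z x] by linarith
qed

lemma orthogonal_unit_decomp_exists:
  fixes z u1 u2 :: "'a::euclidean_space"
  assumes d: "3 \<le> DIM('a)" and u2: "norm u2 = 1" and u12: "orthogonal u1 u2" and u1z: "orthogonal u1 z"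
  obtains u3 c where "norm u3 = 1" "orthogonal u3 u1" "orthogonal u3 u2"
    "z = (z \<bullet> u2) *\<^sub>R u2 + c *\<^sub>R u3"
proof (cases "z - (z \<bullet> u2) *\<^sub>R u2 = 0")
  case True
  have "card {u1, u2} \<le> 2" by (simp add: card_insert_if)
  then have "dim {u1, u2} < DIM('a)"
    using d dim_le_card'[of "{u1, u2}"] by simp
  then obtain u where "norm u = 1" "\<And>y. y \<in> span {u1, u2} \<Longrightarrow> orthogonal u y"
    using unit_orthogonal_to_span_exists by blast
  then show ?thesis using that[of u 0] True by (auto simp: span_base)
next
  case False
  define q where "q = z - (z \<bullet> u2) *\<^sub>R u2"
  have "q \<bullet> u1 = 0" "q \<bullet> u2 = 0"
    using u1z u12 u2 by (simp_all add: q_def orthogonal_def inner_diff_left inner_diff_right inner_commute norm_eq_1)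
  then show ?thesis
    using that[of "(1 / norm q) *\<^sub>R q" "norm q"] False by (simp add: q_def orthogonal_def)
qed

text \<open>The tube around X is thin in the directions u1, u2, which are orthogonal to X; since z lies
  in the plane of u2 and u3, the cap around z is thin in all remaining directions of B.\<close>
lemma orthonormal_frame_for_tube:
  fixes z :: "'a::euclidean_space" and X :: "'a set"
  assumes d: "3 \<le> DIM('a)" and dimX: "dim X + 2 \<le> DIM('a)"
  obtains B u1 u2 u3 where "orthonormal_basis B" "u1 \<in> B" "u2 \<in> B" "u3 \<in> B"
    "u1 \<noteq> u2" "u1 \<noteq> u3" "u2 \<noteq> u3"
    "\<And>v. v \<in> span X \<Longrightarrow> orthogonal u1 v" "\<And>v. v \<in> span X \<Longrightarrow> orthogonal u2 v"
    "\<And>b. b \<in> B - {u1, u2, u3} \<Longrightarrow> b \<bullet> z = 0"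
proof -
  have "dim (insert z X) < DIM('a)" using dimX by (simp add: dim_insert)
  then obtain u1 where u1: "norm u1 = 1" "\<And>y. y \<in> span (insert z X) \<Longrightarrow> orthogonal u1 y"
    using unit_orthogonal_to_span_exists by blast
  have "dim (insert u1 X) < DIM('a)" using dimX by (simp add: dim_insert)
  then obtain u2 where u2: "norm u2 = 1" "\<And>y. y \<in> span (insert u1 X) \<Longrightarrow> orthogonal u2 y"
    using unit_orthogonal_to_span_exists by blast
  have u1X: "\<And>v. v \<in> span X \<Longrightarrow> orthogonal u1 v" and u2X: "\<And>v. v \<in> span X \<Longrightarrow> orthogonal u2 v"
    using u1(2) u2(2) span_mono[of X "insert z X"] span_mono[of X "insert u1 X"] by auto
  have u12: "orthogonal u1 u2" using u2(2) by (simp add: span_base orthogonal_commute)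
  obtain u3 c where u3: "norm u3 = 1" "orthogonal u3 u1" "orthogonal u3 u2"
    "z = (z \<bullet> u2) *\<^sub>R u2 + c *\<^sub>R u3"
    using orthogonal_unit_decomp_exists[OF d u2(1) u12] u1(2)[of z] by (auto simp: span_base)
  have ne: "u1 \<noteq> u2" "u1 \<noteq> u3" "u2 \<noteq> u3"
    using u12 u3(1-3) u2(1) by (auto simp: orthogonal_def norm_eq_1)
  have "pairwise orthogonal {u1, u2, u3}"
    using u12 u3 by (auto simp: pairwise_def orthogonal_commute)
  then obtain B where B: "{u1, u2, u3} \<subseteq> B" "orthonormal_basis B"
    using orthonormal_basis_extend u1(1) u2(1) u3(1) by (metis empty_iff insert_iff)
  have "b \<bullet> z = 0" if "b \<in> B - {u1, u2, u3}" for b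
  proof -
    have "orthogonal b u2" "orthogonal b u3"
      using B that unfolding orthonormal_basis_def pairwise_def by auto
    then show ?thesis by (subst u3(4)) (simp add: orthogonal_def inner_add_right)
  qed
  then show ?thesis using that B ne u1X u2X by auto
qed

lemma sphere_cone_tube_subset_box:
  fixes z :: "'a::euclidean_space" and X :: "'a set"
  assumes z: "norm z = 1" and B: "orthonormal_basis B"
    and u1: "\<And>v. v \<in> span X \<Longrightarrow> orthogonal u1 v" and u2: "\<And>v. v \<in> span X \<Longrightarrow> orthogonal u2 v"
    and Bz: "\<And>b. b \<in> B - {u1, u2, u3} \<Longrightarrow> b \<bullet> z = 0"
    and \<beta>: "\<beta> u1 = s" "\<beta> u2 = s" "\<beta> u3 = 2" "\<And>b. b \<in> B - {u1, u2, u3} \<Longrightarrow> \<beta> b = min r 2"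
  shows "sphere_cone (sph_cap r z \<inter> {t. infdist t (span X) < s}) \<subseteq> {w. \<forall>b\<in>B. \<bar>w \<bullet> b\<bar> \<le> \<beta> b}"
proof clarify
  fix w b assume "w \<in> sphere_cone (sph_cap r z \<inter> {t. infdist t (span X) < s})" and b: "b \<in> B"
  then obtain t x where w: "w = t *\<^sub>R x" "0 < t" "t \<le> 1" and x: "x \<in> sph_cap r z" "infdist x (span X) < s"
    unfolding sphere_cone_def by auto
  have nb: "norm b = 1" using B b by (simp add: orthonormal_basis_def)
  have "\<bar>x \<bullet> b\<bar> \<le> \<beta> b"
  proof -
    consider "b = u1" | "b = u2" | "b = u3" | "b \<in> B - {u1, u2, u3}" using b by blast
    then show ?thesis
    proof cases
      case 1 then show ?thesis using abs_inner_le_infdist_span[OF nb, of X x] u1 x(2) \<beta>(1) by simp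
    next
      case 2 then show ?thesis using abs_inner_le_infdist_span[OF nb, of X x] u2 x(2) \<beta>(2) by simp
    next
      case 3
      have "norm x = 1" using x(1) by (simp add: sph_cap_def)
      then show ?thesis using 3 Cauchy_Schwarz_ineq2[of x b] nb \<beta>(3) by simp
    next
      case 4 then show ?thesis using abs_inner_sph_cap_le[OF z x(1) nb Bz] \<beta>(4) by simp
    qed
  qed
  moreover have "\<bar>w \<bullet> b\<bar> \<le> \<bar>x \<bullet> b\<bar>"
    using w by (simp add: abs_mult mult_left_le_one_le)
  ultimately show "\<bar>w \<bullet> b\<bar> \<le> \<beta> b" by linarith
qed

lemma emeasure_sphere_cone_tube_le:
  fixes z :: "'a::euclidean_space" and X :: "'a set"
  assumes d: "3 \<le> DIM('a)" and dimX: "dim X + 2 \<le> DIM('a)"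
    and z: "norm z = 1" and s: "0 < s" "s \<le> min r 2"
  shows "emeasure lborel (sphere_cone (sph_cap r z \<inter> {t. infdist t (span X) < s}))
     \<le> ennreal (2 * 5 ^ DIM('a) * sqrt (DIM('a)) ^ DIM('a) * unit_ball_vol DIM('a)
                * s\<^sup>2 * (min r 2) ^ (DIM('a) - 3))"
proof -
  define \<rho> where "\<rho> = min r 2"
  define d where "d = DIM('a)"
  obtain B u1 u2 u3 where B: "orthonormal_basis B" "u1 \<in> B" "u2 \<in> B" "u3 \<in> B"
    and ne: "u1 \<noteq> u2" "u1 \<noteq> u3" "u2 \<noteq> u3"
    and u: "\<And>v. v \<in> span X \<Longrightarrow> orthogonal u1 v" "\<And>v. v \<in> span X \<Longrightarrow> orthogonal u2 v"
    and Bz: "\<And>b. b \<in> B - {u1, u2, u3} \<Longrightarrow> b \<bullet> z = 0"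
    using orthonormal_frame_for_tube[OF d dimX, where z = z] by blast
  define S where "S = {u1, u2, u3}"
  define \<beta> where "\<beta> b = (if b = u1 \<or> b = u2 then s else if b = u3 then 2 else \<rho>)" for b
  have fB: "finite B" and cardB: "card B = d"
    using B orthonormal_basis_card by (auto simp: orthonormal_basis_def d_def)
  have "{w. \<forall>b\<in>B. \<bar>w \<bullet> b\<bar> \<le> \<beta> b} = (\<Inter>b\<in>B. {w. \<bar>w \<bullet> b\<bar> \<le> \<beta> b})" by auto
  also have "\<dots> \<in> sets lborel"
    by (auto intro!: borel_closed closed_INT closed_Collect_le continuous_intros)
  finally have "emeasure lborel (sphere_cone (sph_cap r z \<inter> {t. infdist t (span X) < s}))
      \<le> emeasure lborel {w. \<forall>b\<in>B. \<bar>w \<bullet> b\<bar> \<le> \<beta> b}"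
    by (intro emeasure_mono sphere_cone_tube_subset_box[OF z B(1) u Bz]) (use ne ne[THEN not_sym] in \<open>auto simp: \<beta>_def \<rho>_def\<close>)
  also have "\<dots> \<le> ennreal ((\<Prod>b\<in>B. 5 * \<beta> b / s) * (unit_ball_vol d * (s * sqrt (card B)) ^ d))"
    using emeasure_box_le[OF B(1) s(1), of \<beta>] s by (auto simp: \<beta>_def \<rho>_def d_def)
  also have "(\<Prod>b\<in>B. 5 * \<beta> b / s) = (5 / s) ^ d * (\<rho> ^ (d - 3) * (s * s * 2))"
  proof -
    have "card S = 3" using ne by (simp add: S_def)
    then have "card (B - S) = d - 3" using B cardB by (simp add: card_Diff_subset S_def)
    moreover have "(\<Prod>b\<in>B. \<beta> b) = (\<Prod>b\<in>B - S. \<beta> b) * (\<Prod>b\<in>S. \<beta> b)"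
      using B fB by (intro prod.subset_diff) (auto simp: S_def)
    moreover have "(\<Prod>b\<in>B - S. \<beta> b) = (\<Prod>b\<in>B - S. \<rho>)" by (rule prod.cong) (auto simp: \<beta>_def S_def)
    moreover have "(\<Prod>b\<in>S. \<beta> b) = s * s * 2" using ne by (simp add: S_def \<beta>_def)
    ultimately show ?thesis using cardB by (simp add: prod.distrib prod_dividef power_divide)
  qed
  also have "(5 / s) ^ d * (\<rho> ^ (d - 3) * (s * s * 2)) * (unit_ball_vol d * (s * sqrt (card B)) ^ d)
      = 2 * 5 ^ DIM('a) * sqrt (DIM('a)) ^ DIM('a) * unit_ball_vol DIM('a) * s\<^sup>2 * (min r 2) ^ (DIM('a) - 3)"
    using s cardB unfolding d_def \<rho>_def by (simp add: power_mult_distrib power_divide field_simps power2_eq_square)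
  finally show ?thesis .
qed

lemma sph_cap_tube_sets:
  fixes z :: "'a::euclidean_space"
  assumes "norm z = 1" and "0 < r"
  shows "sph_cap r z \<inter> {t. infdist t V < s} \<in> sets (sphere_measure :: 'a measure)"
proof -
  have "{t::'a. infdist t V < s} \<in> sets borel"
    by (intro borel_open open_Collect_less) (auto intro: continuous_intros)
  then show ?thesis
    using sph_cap_sets[OF assms] unfolding sets_sphere_measure sets_restrict_sphere_iff by auto
qed

lemma emeasure_sph_cap_tube_le:
  fixes z :: "'a::euclidean_space" and X :: "'a set"
  assumes d: "3 \<le> DIM('a)" and dimX: "dim X + 2 \<le> DIM('a)"
    and z: "norm z = 1" and r: "0 < r" and s: "0 < s" "s \<le> min r 2"
  shows "emeasure sphere_measure (sph_cap r z \<inter> {t. infdist t (span X) < s})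
     \<le> ennreal (2 * 5 ^ DIM('a) * sqrt (DIM('a)) ^ DIM('a) * s\<^sup>2 * (min r 2) ^ (DIM('a) - 3))"
proof -
  define v where "v = unit_ball_vol DIM('a)"
  have v: "0 < v" by (simp add: v_def unit_ball_vol_pos)
  have "emeasure sphere_measure (sph_cap r z \<inter> {t. infdist t (span X) < s})
      = emeasure lborel (sphere_cone (sph_cap r z \<inter> {t. infdist t (span X) < s})) / ennreal v"
    using emeasure_sphere_measure[OF sph_cap_tube_sets[OF z r]] by (simp add: emeasure_ball v_def)
  also have "\<dots> \<le> ennreal (2 * 5 ^ DIM('a) * sqrt (DIM('a)) ^ DIM('a) * v * s\<^sup>2 * (min r 2) ^ (DIM('a) - 3)) / ennreal v"
    using emeasure_sphere_cone_tube_le[OF d dimX z s] by (intro divide_right_mono_ennreal) (simp add: v_def)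
  also have "\<dots> = ennreal (2 * 5 ^ DIM('a) * sqrt (DIM('a)) ^ DIM('a) * s\<^sup>2 * (min r 2) ^ (DIM('a) - 3))"
    using v r s by (subst divide_ennreal) (auto simp: field_simps)
  finally show ?thesis .
qed

section \<open>Average of the reciprocal distance over a cap\<close>

lemma ennreal_le_suminf: "(f J :: ennreal) \<le> (\<Sum>i. f i)"
  using ennreal_suminf_lessD linorder_not_less by blast

lemma suminf_ennreal_dyadic_eq_top:
  assumes "0 < \<rho>"
  shows "(\<Sum>j. ennreal (2 ^ Suc j / \<rho>)) = top"
proof (rule ccontr)
  assume "(\<Sum>j. ennreal (2 ^ Suc j / \<rho>)) \<noteq> top"
  then obtain M where M: "(\<Sum>j. ennreal (2 ^ Suc j / \<rho>)) = ennreal M" "0 \<le> M"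
    by (cases "\<Sum>j. ennreal (2 ^ Suc j / \<rho>)") auto
  obtain J where J: "M * \<rho> < 2 ^ J" using real_arch_pow[of 2 "M * \<rho>"] by auto
  have "ennreal (2 ^ Suc J / \<rho>) \<le> ennreal M"
    using ennreal_le_suminf[of "\<lambda>j. ennreal (2 ^ Suc j / \<rho>)" J] M(1) by simp
  then have "2 * 2 ^ J \<le> M * \<rho>" using M(2) assms by (simp add: ennreal_le_iff field_simps)
  then show False using J by (smt (verit) zero_less_power)
qed

lemma dyadic_scale_exists:
  fixes \<rho> \<delta> :: real
  assumes "0 < \<delta>" "\<delta> < \<rho>"
  obtains J where "\<rho> / 2 ^ Suc J \<le> \<delta>" "\<delta> < \<rho> / 2 ^ J"
proof -
  have ex: "\<exists>j. \<rho> / 2 ^ Suc j \<le> \<delta>"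
  proof -
    obtain j where "\<rho> / \<delta> < 2 ^ j" using real_arch_pow[of 2 "\<rho> / \<delta>"] by auto
    then have "\<rho> / 2 ^ Suc j \<le> \<delta>" using assms by (simp add: field_simps)
    then show ?thesis ..
  qed
  define J where "J = (LEAST j. \<rho> / 2 ^ Suc j \<le> \<delta>)"
  have "\<rho> / 2 ^ Suc J \<le> \<delta>" unfolding J_def by (rule LeastI_ex[OF ex])
  moreover have "\<delta> < \<rho> / 2 ^ J"
  proof (cases J)
    case (Suc J')
    then have "\<not> \<rho> / 2 ^ Suc J' \<le> \<delta>" unfolding J_def by (metis lessI not_less_Least)
    then show ?thesis using Suc by simp
  qed (use assms in simp)
  ultimately show ?thesis using that by blast
qed

lemma inverse_ennreal_le_dyadic_sum:
  fixes \<rho> \<delta> :: real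
  assumes \<rho>: "0 < \<rho>" and \<delta>: "0 \<le> \<delta>"
  shows "inverse (ennreal \<delta>) \<le> ennreal (1 / \<rho>) +
           (\<Sum>j. ennreal (2 ^ Suc j / \<rho>) * indicator {x. x < \<rho> / 2 ^ j} \<delta>)"
proof -
  let ?f = "\<lambda>j. ennreal (2 ^ Suc j / \<rho>) * indicator {x::real. x < \<rho> / 2 ^ j} \<delta>"
  consider "\<rho> \<le> \<delta>" | "\<delta> = 0" | "0 < \<delta>" "\<delta> < \<rho>" using \<delta> by linarith
  then show ?thesis
  proof cases
    case 1
    then have "inverse (ennreal \<delta>) \<le> ennreal (1 / \<rho>)"
      using \<rho> by (simp add: inverse_ennreal divide_inverse ennreal_leI le_imp_inverse_le)
    then show ?thesis by (simp add: add_increasing2)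
  next
    case 2
    then have "(\<Sum>j. ?f j) = top" using suminf_ennreal_dyadic_eq_top[OF \<rho>] \<rho> by (simp add: indicator_def)
    then show ?thesis by simp
  next
    case 3
    then obtain J where J: "\<rho> / 2 ^ Suc J \<le> \<delta>" "\<delta> < \<rho> / 2 ^ J" by (rule dyadic_scale_exists)
    have "inverse (ennreal \<delta>) = ennreal (1 / \<delta>)" using 3 by (simp add: inverse_ennreal divide_inverse)
    also have "\<dots> \<le> ennreal (2 ^ Suc J / \<rho>)"
      using J(1) 3 \<rho> by (intro ennreal_leI) (simp add: field_simps)
    also have "\<dots> = ?f J" using J(2) by (simp add: indicator_def)
    also have "\<dots> \<le> (\<Sum>j. ?f j)" by (rule ennreal_le_suminf)
    finally show ?thesis by (simp add: add_increasing)
  qed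
qed

lemma nn_integral_inverse_le_dyadic:
  fixes f :: "'a \<Rightarrow> real"
  assumes f: "f \<in> borel_measurable M" "\<And>x. 0 \<le> f x" and A: "A \<in> sets M" and \<rho>: "0 < \<rho>"
  shows "(\<integral>\<^sup>+x\<in>A. inverse (ennreal (f x)) \<partial>M)
    \<le> ennreal (1 / \<rho>) * emeasure M A
      + (\<Sum>j. ennreal (2 ^ Suc j / \<rho>) * emeasure M (A \<inter> {x. f x < \<rho> / 2 ^ j}))"
proof -
  define N where "N j = A \<inter> {x. f x < \<rho> / 2 ^ j}" for j :: nat
  define c where "c j = ennreal (2 ^ Suc j / \<rho>)" for j :: nat
  have N: "N j \<in> sets M" for j
  proof -
    have "N j = A \<inter> {x \<in> space M. f x < \<rho> / 2 ^ j}"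
      using sets.sets_into_space[OF A] by (auto simp: N_def)
    then show ?thesis using A f(1) by simp
  qed
  have "(\<integral>\<^sup>+x\<in>A. inverse (ennreal (f x)) \<partial>M)
      \<le> (\<integral>\<^sup>+x. ennreal (1 / \<rho>) * indicator A x + (\<Sum>j. c j * indicator (N j) x) \<partial>M)"
  proof (rule nn_integral_mono)
    fix x
    have "indicator A x * inverse (ennreal (f x)) \<le> indicator A x * (ennreal (1 / \<rho>) +
           (\<Sum>j. ennreal (2 ^ Suc j / \<rho>) * indicator {y. y < \<rho> / 2 ^ j} (f x)))"
      using inverse_ennreal_le_dyadic_sum[OF \<rho> f(2)] by (rule mult_left_mono) simp
    also have "\<dots> = ennreal (1 / \<rho>) * indicator A x + (\<Sum>j. c j * indicator (N j) x)"
      by (auto simp: indicator_def N_def c_def)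
    finally show "inverse (ennreal (f x)) * indicator A x
        \<le> ennreal (1 / \<rho>) * indicator A x + (\<Sum>j. c j * indicator (N j) x)"
      by (simp add: mult.commute)
  qed
  also have "\<dots> = ennreal (1 / \<rho>) * emeasure M A + (\<Sum>j. c j * emeasure M (N j))"
    using A N by (simp add: nn_integral_add nn_integral_suminf nn_integral_cmult_indicator)
  finally show ?thesis by (simp add: N_def c_def)
qed

text \<open>With \<rho> = min r 2, the dyadic tubes contribute O(\<rho>^(d-2)) to the integral of 1/dist over a cap,
  and the cap has measure at least (\<rho>/32)^(d-1)/16; this constant absorbs the ratio.\<close>
definition cap_integral_const :: "nat \<Rightarrow> real" where
  "cap_integral_const d = 1 + 128 * 5 ^ d * sqrt d ^ d * 32 ^ (d - 1)"

lemma cap_integral_const_pos: "0 < cap_integral_const d"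
  by (simp add: cap_integral_const_def add_pos_nonneg)

lemma suminf_dyadic_tubes_le:
  fixes z :: "'a::euclidean_space" and X :: "'a set"
  assumes d: "3 \<le> DIM('a)" and dimX: "dim X + 2 \<le> DIM('a)" and z: "norm z = 1" and r: "0 < r"
  shows "(\<Sum>j. ennreal (2 ^ Suc j / min r 2) *
            emeasure sphere_measure (sph_cap r z \<inter> {t. infdist t (span X) < min r 2 / 2 ^ j}))
     \<le> ennreal (8 * 5 ^ DIM('a) * sqrt (DIM('a)) ^ DIM('a) * (min r 2) ^ (DIM('a) - 2))"
proof -
  define \<rho> where "\<rho> = min r 2"
  define C where "C = 2 * 5 ^ DIM('a) * sqrt (DIM('a)) ^ DIM('a)"
  have \<rho>: "0 < \<rho>" "\<rho> \<le> 2" using r by (auto simp: \<rho>_def)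
  have C: "0 \<le> C" by (simp add: C_def)
  have "(\<Sum>j. ennreal (2 ^ Suc j / \<rho>) * emeasure sphere_measure (sph_cap r z \<inter> {t. infdist t (span X) < \<rho> / 2 ^ j}))
      \<le> (\<Sum>j. ennreal (2 * C * \<rho> ^ (DIM('a) - 2) * (1/2) ^ j))"
  proof (rule suminf_le)
    fix j :: nat
    have "\<rho> / 2 ^ j \<le> \<rho>" using \<rho> by (simp add: divide_le_eq)
    then have "emeasure sphere_measure (sph_cap r z \<inter> {t. infdist t (span X) < \<rho> / 2 ^ j})
        \<le> ennreal (C * (\<rho> / 2 ^ j)\<^sup>2 * \<rho> ^ (DIM('a) - 3))"
      using emeasure_sph_cap_tube_le[OF d dimX z r, of "\<rho> / 2 ^ j"] \<rho> by (simp add: C_def \<rho>_def mult.assoc)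
    then have "ennreal (2 ^ Suc j / \<rho>) * emeasure sphere_measure (sph_cap r z \<inter> {t. infdist t (span X) < \<rho> / 2 ^ j})
        \<le> ennreal (2 ^ Suc j / \<rho>) * ennreal (C * (\<rho> / 2 ^ j)\<^sup>2 * \<rho> ^ (DIM('a) - 3))"
      by (rule mult_left_mono) simp
    also have "\<dots> = ennreal (2 ^ Suc j / \<rho> * (C * (\<rho> / 2 ^ j)\<^sup>2 * \<rho> ^ (DIM('a) - 3)))"
      using \<rho> C by (simp add: ennreal_mult'[symmetric])
    also have "2 ^ Suc j / \<rho> * (C * (\<rho> / 2 ^ j)\<^sup>2 * \<rho> ^ (DIM('a) - 3)) = 2 * C * \<rho> ^ (DIM('a) - 2) * (1/2) ^ j"
    proof -
      have "DIM('a) - 2 = Suc (DIM('a) - 3)" using d by simp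
      then have "\<rho> ^ (DIM('a) - 2) = \<rho> * \<rho> ^ (DIM('a) - 3)" by simp
      then show ?thesis using \<rho> by (simp add: field_simps power2_eq_square power_divide)
    qed
    finally show "ennreal (2 ^ Suc j / \<rho>) * emeasure sphere_measure (sph_cap r z \<inter> {t. infdist t (span X) < \<rho> / 2 ^ j})
        \<le> ennreal (2 * C * \<rho> ^ (DIM('a) - 2) * (1/2) ^ j)" .
  qed simp_all
  also have "(\<Sum>j. ennreal (2 * C * \<rho> ^ (DIM('a) - 2) * (1/2) ^ j)) = ennreal (4 * C * \<rho> ^ (DIM('a) - 2))"
  proof (rule suminf_ennreal_eq)
    show "(\<lambda>j. 2 * C * \<rho> ^ (DIM('a) - 2) * (1/2) ^ j) sums (4 * C * \<rho> ^ (DIM('a) - 2))"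
      using sums_mult[OF geometric_sums[of "1/2::real"], of "2 * C * \<rho> ^ (DIM('a) - 2)"] by (simp add: mult.assoc)
  qed (use C \<rho> in simp)
  also have "4 * C * \<rho> ^ (DIM('a) - 2) = 8 * 5 ^ DIM('a) * sqrt (DIM('a)) ^ DIM('a) * \<rho> ^ (DIM('a) - 2)"
    by (simp add: C_def)
  finally show ?thesis unfolding \<rho>_def .
qed

lemma nn_integral_sph_cap_inverse_infdist_le:
  fixes z :: "'a::euclidean_space" and X :: "'a set"
  assumes d: "3 \<le> DIM('a)" and dimX: "dim X + 2 \<le> DIM('a)" and z: "norm z = 1" and r: "0 < r"
  shows "(\<integral>\<^sup>+t\<in>sph_cap r z. inverse (ennreal (infdist t (span X))) \<partial>sphere_measure)
     \<le> ennreal (cap_integral_const DIM('a) / min r 2) * emeasure sphere_measure (sph_cap r z)"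
proof -
  define \<rho> where "\<rho> = min r 2"
  define K where "K = cap_integral_const DIM('a)"
  define P where "P = emeasure sphere_measure (sph_cap r z)"
  have \<rho>: "0 < \<rho>" using r by (simp add: \<rho>_def)
  have K: "1 \<le> K" by (simp add: K_def cap_integral_const_def)
  have tubes: "ennreal (8 * 5 ^ DIM('a) * sqrt (DIM('a)) ^ DIM('a) * \<rho> ^ (DIM('a) - 2)) \<le> ennreal ((K - 1) / \<rho>) * P"
  proof -
    have "DIM('a) - 1 = Suc (DIM('a) - 2)" using d by simp
    then have "\<rho> ^ (DIM('a) - 1) = \<rho> * \<rho> ^ (DIM('a) - 2)" by (simp only: power_Suc)
    then have "8 * 5 ^ DIM('a) * sqrt (DIM('a)) ^ DIM('a) * \<rho> ^ (DIM('a) - 2)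
        = (K - 1) / \<rho> * ((\<rho> / 32) ^ (DIM('a) - 1) / 16)"
      using \<rho> by (simp add: K_def cap_integral_const_def power_divide)
    also have "ennreal \<dots> = ennreal ((K - 1) / \<rho>) * ennreal ((\<rho> / 32) ^ (DIM('a) - 1) / 16)"
      using K \<rho> by (intro ennreal_mult') auto
    also have "\<dots> \<le> ennreal ((K - 1) / \<rho>) * P"
      using emeasure_sph_cap_ge[OF z r] unfolding P_def \<rho>_def by (rule mult_left_mono) simp
    finally show ?thesis .
  qed
  have "(\<integral>\<^sup>+t\<in>sph_cap r z. inverse (ennreal (infdist t (span X))) \<partial>sphere_measure)
      \<le> ennreal (1 / \<rho>) * P + (\<Sum>j. ennreal (2 ^ Suc j / \<rho>) *
            emeasure sphere_measure (sph_cap r z \<inter> {t. infdist t (span X) < \<rho> / 2 ^ j}))"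
    unfolding P_def by (rule nn_integral_inverse_le_dyadic[OF borel_measurable_infdist_sphere_measure infdist_nonneg sph_cap_sets[OF z r] \<rho>])
  also have "\<dots> \<le> ennreal (1 / \<rho>) * P + ennreal ((K - 1) / \<rho>) * P"
    using order_trans[OF suminf_dyadic_tubes_le[OF d dimX z r] tubes[unfolded \<rho>_def]]
    unfolding \<rho>_def by (rule add_left_mono)
  also have "\<dots> = ennreal (K / \<rho>) * P"
  proof -
    have "ennreal (1 / \<rho>) + ennreal ((K - 1) / \<rho>) = ennreal (1 / \<rho> + (K - 1) / \<rho>)"
      by (rule ennreal_plus[symmetric]) (use K \<rho> in auto)
    also have "1 / \<rho> + (K - 1) / \<rho> = K / \<rho>" by (simp add: add_divide_distrib[symmetric])
    finally show ?thesis by (metis distrib_right)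
  qed
  finally show ?thesis unfolding \<rho>_def K_def P_def .
qed

section \<open>Integrating over products of caps\<close>

lemma ennreal_mult_inverse_le_1: "a * inverse a \<le> (1::ennreal)"
  by (cases "a = 0 \<or> a = top")
    (auto simp: top.not_eq_extremum ennreal_divide_self[unfolded divide_ennreal_def])

lemma inverse_ennreal_mult:
  fixes a b :: real
  assumes "0 \<le> a" "0 \<le> b"
  shows "inverse (ennreal (a * b)) = inverse (ennreal a) * inverse (ennreal b)"
proof (cases "a = 0 \<or> b = 0")
  case True
  then show ?thesis by (auto simp: ennreal_top_mult ennreal_mult_top)
next
  case False
  then show ?thesis using assms by (simp add: ennreal_mult' ennreal_inverse_mult)
qed

lemma Det_on_insert_fun_upd:
  fixes w :: "'n::finite \<Rightarrow> 'a::euclidean_space"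
  assumes "k \<notin> S"
  shows "Det_on (insert k S) (w(k := t)) = infdist t (span (w ` S)) * Det_on S w"
proof -
  have "(w(k := t)) ` S = w ` S" "Det_on S (w(k := t)) = Det_on S w"
    using assms by (auto intro!: Det_on_cong)
  then show ?thesis using Det_on_remove[of k "insert k S" "w(k := t)"] assms by simp
qed

definition sph_cap_prod :: "real \<Rightarrow> ('n::finite \<Rightarrow> 'a::euclidean_space) \<Rightarrow> ('n \<Rightarrow> 'a) set" where
  "sph_cap_prod r x = PiE UNIV (\<lambda>i. sph_cap r (x i))"

lemma sets_sph_cap_prod:
  assumes "\<And>i. norm (x i) = 1" and "0 < r"
  shows "sph_cap_prod r x \<in> sets (PiM UNIV (\<lambda>_::'n::finite. sphere_measure :: 'a::euclidean_space measure))"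
  unfolding sph_cap_prod_def by (rule sets_PiM_I_finite) (auto intro: sph_cap_sets[OF assms])

lemma emeasure_sph_cap_prod:
  assumes "\<And>i. norm (x i) = 1" and "0 < r"
  shows "emeasure (PiM UNIV (\<lambda>_::'n::finite. sphere_measure :: 'a::euclidean_space measure)) (sph_cap_prod r x)
    = (\<Prod>i\<in>UNIV. emeasure sphere_measure (sph_cap r (x i)))"
proof -
  interpret product_sigma_finite "\<lambda>_::'n. sphere_measure :: 'a measure"
    by (rule product_sigma_finite_sphere_measure)
  show ?thesis unfolding sph_cap_prod_def by (rule emeasure_PiM) (auto intro: sph_cap_sets[OF assms])
qed

lemma measurable_component_sphere_measure:
  "(\<lambda>y. y i) \<in> borel_measurable (PiM UNIV (\<lambda>_::'n. sphere_measure :: 'a::euclidean_space measure))"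
proof -
  have "(\<lambda>y. y i) \<in> PiM UNIV (\<lambda>_::'n. sphere_measure :: 'a measure) \<rightarrow>\<^sub>M sphere_measure"
    by (rule measurable_component_singleton) simp
  moreover have "PiM UNIV (\<lambda>_::'n. sphere_measure :: 'a measure) \<rightarrow>\<^sub>M (sphere_measure :: 'a measure)
      = PiM UNIV (\<lambda>_::'n. sphere_measure :: 'a measure) \<rightarrow>\<^sub>M restrict_space borel (sphere (0::'a) 1)"
    by (rule measurable_cong_sets) (simp_all add: sets_sphere_measure)
  ultimately show ?thesis using measurable_restrict_space2_iff by blast
qed

lemma borel_measurable_Det_on:
  "Det_on T \<in> borel_measurable (PiM UNIV (\<lambda>_::'n::finite. sphere_measure :: 'a::euclidean_space measure))"
proof -
  have "(\<lambda>y. y i \<bullet> y j) \<in> borel_measurable (PiM UNIV (\<lambda>_::'n. sphere_measure :: 'a measure))" for i j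
    by (intro borel_measurable_inner measurable_component_sphere_measure)
  then have "(\<lambda>y. gram_on T y $ i $ j) \<in> borel_measurable (PiM UNIV (\<lambda>_::'n. sphere_measure :: 'a measure))" for i j
    unfolding gram_on_def by (cases "i \<in> T"; cases "j \<in> T"; cases "i = j") simp_all
  then have "(\<lambda>y. det (gram_on T y)) \<in> borel_measurable (PiM UNIV (\<lambda>_::'n. sphere_measure :: 'a measure))"
    unfolding det_def by (intro borel_measurable_sum borel_measurable_times borel_measurable_prod) auto
  then show ?thesis unfolding Det_on_def by measurable
qed

lemma nn_integral_PiM_le_by_coordinate:
  fixes M :: "'b measure" and k :: "'i::finite"
  assumes M: "sigma_finite_measure M"
    and F: "F \<in> borel_measurable (PiM UNIV (\<lambda>_. M))" and G: "G \<in> borel_measurable (PiM UNIV (\<lambda>_. M))"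
    and le: "\<And>w. w \<in> space (PiM (UNIV - {k}) (\<lambda>_. M)) \<Longrightarrow>
      (\<integral>\<^sup>+t. F (w(k := t)) \<partial>M) \<le> c * (\<integral>\<^sup>+t. G (w(k := t)) \<partial>M)"
  shows "integral\<^sup>N (PiM UNIV (\<lambda>_. M)) F \<le> c * integral\<^sup>N (PiM UNIV (\<lambda>_. M)) G"
proof -
  interpret product_sigma_finite "\<lambda>_::'i. M" using M by (simp add: product_sigma_finite_def)
  define I where "I = UNIV - {k}"
  have I: "finite I" "k \<notin> I" and UI: "PiM UNIV (\<lambda>_. M) = PiM (insert k I) (\<lambda>_. M)"
    by (auto simp: I_def insert_absorb)
  have "integral\<^sup>N (PiM UNIV (\<lambda>_. M)) F = (\<integral>\<^sup>+w. (\<integral>\<^sup>+t. F (w(k := t)) \<partial>M) \<partial>PiM I (\<lambda>_. M))"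
    unfolding UI by (rule product_nn_integral_insert[OF I]) (use F UI in simp)
  also have "\<dots> \<le> (\<integral>\<^sup>+w. (\<integral>\<^sup>+t. c * G (w(k := t)) \<partial>M) \<partial>PiM I (\<lambda>_. M))"
  proof (rule nn_integral_mono)
    fix w assume w: "w \<in> space (PiM I (\<lambda>_. M))"
    have "(\<lambda>t. G (w(k := t))) \<in> borel_measurable M"
      using measurable_comp[OF measurable_component_update[OF w I(2)], of G] G UI by (simp add: comp_def)
    then show "(\<integral>\<^sup>+t. F (w(k := t)) \<partial>M) \<le> (\<integral>\<^sup>+t. c * G (w(k := t)) \<partial>M)"
      using le[of w] w by (simp add: nn_integral_cmult I_def)
  qed
  also have "\<dots> = (\<integral>\<^sup>+y. c * G y \<partial>PiM UNIV (\<lambda>_. M))"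
    unfolding UI by (rule product_nn_integral_insert[OF I, symmetric]) (use G UI in simp)
  also have "\<dots> = c * integral\<^sup>N (PiM UNIV (\<lambda>_. M)) G" by (rule nn_integral_cmult[OF G])
  finally show ?thesis .
qed

lemma dim_image_less_CARD:
  fixes w :: "'n::finite \<Rightarrow> 'a::euclidean_space"
  assumes "k \<notin> S"
  shows "dim (w ` S) < CARD('n)"
proof -
  have "dim (w ` S) \<le> card (w ` S)" by (rule dim_le_card') simp
  also have "\<dots> \<le> card S" by (rule card_image_le) simp
  also have "\<dots> < CARD('n)" using assms by (intro psubset_card_mono) auto
  finally show ?thesis .
qed

lemma indicator_sph_cap_prod_fun_upd:
  "indicator (sph_cap_prod r x) (w(k := t))
    = (indicator (sph_cap r (x k)) t * indicator (Pi (- {k}) (\<lambda>i. sph_cap r (x i))) w :: ennreal)"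
  by (auto simp: indicator_def sph_cap_prod_def PiE_iff Pi_iff split: if_splits)

lemma nn_integral_fun_upd_Det_on_ratio_le:
  fixes x w :: "'n::finite \<Rightarrow> 'a::euclidean_space"
  assumes d: "3 \<le> DIM('a)" and n: "CARD('n) + 1 \<le> DIM('a)" and x: "\<And>i. norm (x i) = 1" and r: "0 < r"
    and kS: "k \<notin> S" and TS: "T \<subseteq> S"
  shows "(\<integral>\<^sup>+t. ennreal (Det_on T (w(k := t))) * inverse (ennreal (Det_on (insert k S) (w(k := t))))
            * indicator (sph_cap_prod r x) (w(k := t)) \<partial>sphere_measure)
    \<le> ennreal (cap_integral_const DIM('a) / min r 2) *
      (\<integral>\<^sup>+t. ennreal (Det_on T (w(k := t))) * inverse (ennreal (Det_on S (w(k := t))))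
            * indicator (sph_cap_prod r x) (w(k := t)) \<partial>sphere_measure)"
proof -
  define C where "C = sph_cap r (x k)"
  define V where "V = span (w ` S)"
  define a where "a = ennreal (Det_on T w) * inverse (ennreal (Det_on S w))
    * indicator (Pi (- {k}) (\<lambda>i. sph_cap r (x i))) w"
  have "Det_on T (w(k := t)) = Det_on T w" "Det_on S (w(k := t)) = Det_on S w" for t
    using kS TS by (auto intro!: Det_on_cong)
  moreover have "Det_on (insert k S) (w(k := t)) = infdist t V * Det_on S w" for t
    using Det_on_insert_fun_upd[OF kS] by (simp add: V_def)
  ultimately have
    F: "ennreal (Det_on T (w(k := t))) * inverse (ennreal (Det_on (insert k S) (w(k := t))))
          * indicator (sph_cap_prod r x) (w(k := t)) = a * (inverse (ennreal (infdist t V)) * indicator C t)" and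
    G: "ennreal (Det_on T (w(k := t))) * inverse (ennreal (Det_on S (w(k := t))))
          * indicator (sph_cap_prod r x) (w(k := t)) = a * indicator C t" for t
    unfolding indicator_sph_cap_prod_fun_upd a_def C_def
    by (simp_all add: inverse_ennreal_mult infdist_nonneg Det_on_nonneg ac_simps)
  have "dim (w ` S) + 2 \<le> DIM('a)" using dim_image_less_CARD[OF kS, of w] n by linarith
  then have bound: "(\<integral>\<^sup>+t\<in>C. inverse (ennreal (infdist t V)) \<partial>sphere_measure)
      \<le> ennreal (cap_integral_const DIM('a) / min r 2) * emeasure sphere_measure C"
    unfolding C_def V_def by (rule nn_integral_sph_cap_inverse_infdist_le[OF d _ x r])
  have [measurable]: "C \<in> sets sphere_measure" unfolding C_def by (rule sph_cap_sets[OF x r])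
  note [measurable] = borel_measurable_infdist_sphere_measure
  have "(\<integral>\<^sup>+t. ennreal (Det_on T (w(k := t))) * inverse (ennreal (Det_on (insert k S) (w(k := t))))
            * indicator (sph_cap_prod r x) (w(k := t)) \<partial>sphere_measure)
      = a * (\<integral>\<^sup>+t\<in>C. inverse (ennreal (infdist t V)) \<partial>sphere_measure)"
    unfolding F by (rule nn_integral_cmult) measurable
  also have "\<dots> \<le> a * (ennreal (cap_integral_const DIM('a) / min r 2) * emeasure sphere_measure C)"
    using bound by (rule mult_left_mono) simp
  also have "\<dots> = ennreal (cap_integral_const DIM('a) / min r 2) *
      (\<integral>\<^sup>+t. ennreal (Det_on T (w(k := t))) * inverse (ennreal (Det_on S (w(k := t))))
            * indicator (sph_cap_prod r x) (w(k := t)) \<partial>sphere_measure)"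
    unfolding G by (simp add: nn_integral_cmult_indicator ac_simps)
  finally show ?thesis .
qed

lemma nn_integral_Det_on_ratio_le:
  fixes x :: "'n::finite \<Rightarrow> 'a::euclidean_space"
  assumes d: "3 \<le> DIM('a)" and n: "CARD('n) + 1 \<le> DIM('a)" and x: "\<And>i. norm (x i) = 1" and r: "0 < r"
    and RT: "R \<inter> T = {}"
  shows "(\<integral>\<^sup>+y\<in>sph_cap_prod r x. ennreal (Det_on T y) * inverse (ennreal (Det_on (T \<union> R) y))
            \<partial>PiM UNIV (\<lambda>_. sphere_measure))
    \<le> ennreal ((cap_integral_const DIM('a) / min r 2) ^ card R)
      * emeasure (PiM UNIV (\<lambda>_. sphere_measure)) (sph_cap_prod r x)"
proof -
  let ?M = "PiM UNIV (\<lambda>_::'n. sphere_measure :: 'a measure)"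
  let ?K = "cap_integral_const DIM('a) / min r 2"
  have B: "sph_cap_prod r x \<in> sets ?M" by (rule sets_sph_cap_prod[OF x r])
  have meas: "(\<lambda>y. ennreal (Det_on T y) * inverse (ennreal (Det_on S y)) * indicator (sph_cap_prod r x) y)
      \<in> borel_measurable ?M" for S
    using B borel_measurable_Det_on by measurable
  have "finite R" by simp
  then show ?thesis using RT
  proof (induction R rule: finite_induct)
    case empty
    have "(\<integral>\<^sup>+y\<in>sph_cap_prod r x. ennreal (Det_on T y) * inverse (ennreal (Det_on T y)) \<partial>?M)
        \<le> (\<integral>\<^sup>+y. indicator (sph_cap_prod r x) y \<partial>?M)"
      by (intro nn_integral_mono) (simp add: ennreal_mult_inverse_le_1 indicator_def)
    then show ?case using B by simp
  next
    case (insert k R)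
    have "(\<integral>\<^sup>+y\<in>sph_cap_prod r x. ennreal (Det_on T y) * inverse (ennreal (Det_on (T \<union> insert k R) y)) \<partial>?M)
        \<le> ennreal ?K * (\<integral>\<^sup>+y\<in>sph_cap_prod r x. ennreal (Det_on T y) * inverse (ennreal (Det_on (T \<union> R) y)) \<partial>?M)"
      using insert.hyps insert.prems finite_measure_sphere_measure
      by (intro nn_integral_PiM_le_by_coordinate[where k = k] meas)
        (auto intro: finite_measure.axioms(1) nn_integral_fun_upd_Det_on_ratio_le[OF d n x r])
    also have "\<dots> \<le> ennreal ?K * (ennreal (?K ^ card R) * emeasure ?M (sph_cap_prod r x))"
      using insert.IH insert.prems by (intro mult_left_mono) auto
    also have "\<dots> = ennreal (?K ^ card (insert k R)) * emeasure ?M (sph_cap_prod r x)"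
    proof -
      have "ennreal ?K * ennreal (?K ^ card R) = ennreal (?K * ?K ^ card R)"
        using r cap_integral_const_pos[of "DIM('a)"] by (intro ennreal_mult'[symmetric]) simp
      also have "?K * ?K ^ card R = ?K ^ card (insert k R)" using insert.hyps by simp
      finally show ?thesis by (simp add: mult.assoc[symmetric])
    qed
    finally show ?case .
  qed
qed

lemma Det_on_mult_inverse_le_sum:
  fixes x y :: "'n::finite \<Rightarrow> 'a::euclidean_space"
  assumes \<rho>: "0 \<le> \<rho>" and near: "\<forall>i. norm (x i - y i) \<le> \<rho>"
  shows "ennreal (Det_on UNIV x) * inverse (ennreal (Det_on UNIV y))
    \<le> (\<Sum>T\<in>Pow UNIV. ennreal (2 ^ CARD('n) * \<rho> ^ card (UNIV - T))
          * (ennreal (Det_on T y) * inverse (ennreal (Det_on (T \<union> (UNIV - T)) y))))"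
proof -
  have "ennreal (Det_on UNIV x) \<le> ennreal (\<Sum>T\<in>Pow UNIV. 2 ^ CARD('n) * \<rho> ^ card (UNIV - T) * Det_on T y)"
    using Det_on_perturb_le[OF \<rho> near] by (intro ennreal_leI) (simp add: sum_distrib_left mult.assoc)
  also have "\<dots> = (\<Sum>T\<in>Pow UNIV. ennreal (2 ^ CARD('n) * \<rho> ^ card (UNIV - T)) * ennreal (Det_on T y))"
    using \<rho> Det_on_nonneg
    by (subst sum_ennreal[symmetric]) (auto simp: ennreal_mult' intro!: mult_nonneg_nonneg)
  finally have "ennreal (Det_on UNIV x) * inverse (ennreal (Det_on UNIV y))
      \<le> (\<Sum>T\<in>Pow UNIV. ennreal (2 ^ CARD('n) * \<rho> ^ card (UNIV - T)) * ennreal (Det_on T y))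
        * inverse (ennreal (Det_on UNIV y))"
    by (rule mult_right_mono) simp
  then show ?thesis by (simp add: sum_distrib_right mult.assoc)
qed

lemma sph_cap_prod_norm_diff_le:
  assumes "\<And>i. norm (x i) = 1" and "y \<in> sph_cap_prod r x"
  shows "\<forall>i. norm (x i - y i) \<le> min r 2"
proof
  fix i
  have "y i \<in> sph_cap r (x i)" using assms(2) by (auto simp: sph_cap_prod_def)
  from sph_cap_norm_diff_le[OF assms(1) this] show "norm (x i - y i) \<le> min r 2"
    by (simp add: norm_minus_commute)
qed

lemma nn_integral_inverse_Det_on_mult_le:
  fixes x :: "'n::finite \<Rightarrow> 'a::euclidean_space"
  assumes d: "3 \<le> DIM('a)" and n: "CARD('n) + 1 \<le> DIM('a)" and x: "\<And>i. norm (x i) = 1" and r: "0 < r"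
  shows "(\<integral>\<^sup>+y\<in>sph_cap_prod r x. inverse (ennreal (Det_on UNIV y)) \<partial>PiM UNIV (\<lambda>_. sphere_measure))
      * ennreal (Det_on UNIV x)
    \<le> ennreal (\<Sum>T\<in>Pow (UNIV::'n set). 2 ^ CARD('n) * cap_integral_const DIM('a) ^ card (UNIV - T))
      * emeasure (PiM UNIV (\<lambda>_. sphere_measure)) (sph_cap_prod r x)"
proof -
  let ?M = "PiM UNIV (\<lambda>_::'n. sphere_measure :: 'a measure)"
  let ?B = "sph_cap_prod r x"
  let ?K = "cap_integral_const DIM('a)"
  define \<rho> where "\<rho> = min r 2"
  define c where "c T = 2 ^ CARD('n) * \<rho> ^ card (UNIV - T)" for T :: "'n set"
  define g where "g T y = ennreal (Det_on T y) * inverse (ennreal (Det_on (T \<union> (UNIV - T)) y)) * indicator ?B y"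
    for T y
  have \<rho>: "0 < \<rho>" using r by (simp add: \<rho>_def)
  have [measurable]: "?B \<in> sets ?M" by (rule sets_sph_cap_prod[OF x r])
  note [measurable] = borel_measurable_Det_on
  have "(\<integral>\<^sup>+y\<in>?B. inverse (ennreal (Det_on UNIV y)) \<partial>?M) * ennreal (Det_on UNIV x)
      = (\<integral>\<^sup>+y. ennreal (Det_on UNIV x) * inverse (ennreal (Det_on UNIV y)) * indicator ?B y \<partial>?M)"
    by (subst nn_integral_multc[symmetric]) (measurable, simp add: ac_simps)
  also have "\<dots> \<le> (\<integral>\<^sup>+y. (\<Sum>T\<in>Pow UNIV. ennreal (c T) * g T y) \<partial>?M)"
  proof (rule nn_integral_mono)
    fix y
    show "ennreal (Det_on UNIV x) * inverse (ennreal (Det_on UNIV y)) * indicator ?B y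
        \<le> (\<Sum>T\<in>Pow UNIV. ennreal (c T) * g T y)"
    proof (cases "y \<in> ?B")
      case True
      then show ?thesis
        using Det_on_mult_inverse_le_sum[of \<rho> x y] sph_cap_prod_norm_diff_le[OF x True] \<rho>
        by (simp add: g_def c_def \<rho>_def sum_distrib_right mult.assoc)
    qed simp
  qed
  also have "\<dots> = (\<Sum>T\<in>Pow UNIV. ennreal (c T) * integral\<^sup>N ?M (g T))"
    unfolding g_def by (simp add: nn_integral_sum nn_integral_cmult)
  also have "\<dots> \<le> (\<Sum>T\<in>Pow UNIV. ennreal (c T) * (ennreal ((?K / \<rho>) ^ card (UNIV - T)) * emeasure ?M ?B))"
  proof (intro sum_mono mult_left_mono)
    fix T :: "'n set"
    show "integral\<^sup>N ?M (g T) \<le> ennreal ((?K / \<rho>) ^ card (UNIV - T)) * emeasure ?M ?B"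
      using nn_integral_Det_on_ratio_le[where x = x and r = r and R = "UNIV - T" and T = T, OF d n x r]
      unfolding g_def \<rho>_def by blast
  qed simp
  also have "\<dots> = (\<Sum>T\<in>Pow (UNIV::'n set). ennreal (2 ^ CARD('n) * ?K ^ card (UNIV - T)) * emeasure ?M ?B)"
    using \<rho> cap_integral_const_pos[of "DIM('a)"]
    by (intro sum.cong) (simp_all add: c_def ennreal_mult'[symmetric] power_divide mult.assoc[symmetric])
  also have "\<dots> = ennreal (\<Sum>T\<in>Pow (UNIV::'n set). 2 ^ CARD('n) * ?K ^ card (UNIV - T)) * emeasure ?M ?B"
    using cap_integral_const_pos[of "DIM('a)"] by (simp add: sum_distrib_right[symmetric])
  finally show ?thesis .
qed

lemma emeasure_sph_cap_prod_pos_finite: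
  fixes x :: "'n::finite \<Rightarrow> 'a::euclidean_space"
  assumes x: "\<And>i. norm (x i) = 1" and r: "0 < r"
  shows "emeasure (PiM UNIV (\<lambda>_. sphere_measure)) (sph_cap_prod r x) \<noteq> 0"
    and "emeasure (PiM UNIV (\<lambda>_. sphere_measure)) (sph_cap_prod r x) \<noteq> top"
proof -
  have "0 < ennreal ((min r 2 / 32) ^ (DIM('a) - 1) / 16)" using r by simp
  then have "0 < emeasure sphere_measure (sph_cap r (x i))" for i
    using emeasure_sph_cap_ge[OF x r, of i] by (rule order.strict_trans2)
  then show "emeasure (PiM UNIV (\<lambda>_. sphere_measure)) (sph_cap_prod r x) \<noteq> 0"
    unfolding emeasure_sph_cap_prod[OF x r] by (simp add: zero_less_iff_neq_zero)
  have "emeasure sphere_measure (sph_cap r (x i)) \<noteq> top" for i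
    using emeasure_sphere_measure_le_1[OF sph_cap_sets[OF x r, of i]] by (auto simp: top_unique)
  then show "emeasure (PiM UNIV (\<lambda>_. sphere_measure)) (sph_cap_prod r x) \<noteq> top"
    unfolding emeasure_sph_cap_prod[OF x r] by (simp add: ennreal_prod_eq_top)
qed

lemma D_mult_Det_le:
  fixes x :: "'n::finite \<Rightarrow> real ^ 'd"
  assumes d: "3 \<le> CARD('d)" and n: "CARD('n) + 1 \<le> CARD('d)"
    and x: "\<forall>i. x i \<in> sphere 0 1" and r: "0 < r"
  shows "D r x * ennreal (Det x)
    \<le> ennreal (\<Sum>T\<in>Pow (UNIV::'n set). 2 ^ CARD('n) * cap_integral_const CARD('d) ^ card (UNIV - T))"
proof -
  let ?M = "PiM UNIV (\<lambda>_::'n. sphere_measure :: (real ^ 'd) measure)"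
  let ?C = "\<Sum>T\<in>Pow (UNIV::'n set). 2 ^ CARD('n) * cap_integral_const CARD('d) ^ card (UNIV - T)"
  have x': "\<And>i. norm (x i) = 1" using x by simp
  have "D r x * ennreal (Det x)
      = (\<integral>\<^sup>+y\<in>sph_cap_prod r x. inverse (ennreal (Det_on UNIV y)) \<partial>?M) * ennreal (Det_on UNIV x)
        / emeasure ?M (sph_cap_prod r x)"
    unfolding D_def Let_def sph_cap_prod_def Det_eq_Det_on_UNIV by (simp add: ennreal_times_divide mult.commute)
  also have "\<dots> \<le> ennreal ?C * emeasure ?M (sph_cap_prod r x) / emeasure ?M (sph_cap_prod r x)"
    using nn_integral_inverse_Det_on_mult_le[OF _ _ x' r] d n by (intro divide_right_mono_ennreal) simp
  also have "\<dots> = ennreal ?C"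
    using emeasure_sph_cap_prod_pos_finite[OF x' r] by (rule ennreal_mult_divide_eq)
  finally show ?thesis .
qed

theorem lemma4:
  assumes "CARD('d::finite) \<ge> 3"
    and "CARD('n::finite) \<le> CARD('d) - 1"
  shows "\<exists>C::real. C > 0 \<and>
           (\<forall>r::real. r > 0 \<longrightarrow>
             (\<forall>x :: 'n \<Rightarrow> real ^ 'd. (\<forall>i. x i \<in> sphere 0 1) \<longrightarrow>
                D r x * ennreal (Det x) < ennreal C))"
proof -
  define C where "C = (\<Sum>T\<in>Pow (UNIV::'n set). 2 ^ CARD('n) * cap_integral_const CARD('d) ^ card (UNIV - T))"
  have "0 \<le> C" unfolding C_def using cap_integral_const_pos by (intro sum_nonneg) (simp add: less_imp_le)
  have n: "CARD('n) + 1 \<le> CARD('d)" using assms by simp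
  have "D r x * ennreal (Det x) < ennreal (C + 1)"
    if "0 < r" "\<forall>i. x i \<in> sphere 0 1" for r and x :: "'n \<Rightarrow> real ^ 'd"
  proof -
    have "D r x * ennreal (Det x) \<le> ennreal C"
      unfolding C_def by (rule D_mult_Det_le[OF assms(1) n that(2,1)])
    also have "\<dots> < ennreal (C + 1)" using \<open>0 \<le> C\<close> by (intro ennreal_lessI) auto
    finally show ?thesis .
  qed
  with \<open>0 \<le> C\<close> show ?thesis by (intro exI[of _ "C + 1"]) auto
qed

end
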